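(* Consider problem (P) and Algorithm 3.1 as described in the context, and let $\{(x_k,\rho_k,d_k,\xi_k,\lambda_k,r_k,W_k)\}$ be a sequence generated by Algorithm 3.1. Then: (1) For every $k$, $\theta'_{\rho_k,r_k}(x_k;d_k)\le -d_k^TW_kd_k$, and, provided Assumption 3.1 holds, $d_k$ is a descent direction of $\theta_{\rho_k,r_k}$ at $x_k$. (2) Suppose further that Assumption 3.1 holds, that the algorithm does not terminate within finitely many iterations, and that the sequences $\{x_k\}$, $\{\lambda_k\}$ and $\{r_k\}$ are bounded. Then $\bar K:=\{k:\|d_k\|\le\hat\eta\rho_k^{-1}\}$ is an infinite set and every accumulation point of $\{x_k\}_{k\in\bar K}$ is a (Clarke) stationary point of problem (P).
   Context: Problem (P): minimize $f(x)$ subject to $g_i(x)\le 0$ ($i=1,\dots,p$), $h_j(x)=0$ ($j=p+1,\dots,q$), where $f,g_i,h_j:\mathbb{R}^n\to\mathbb{R}$ are locally Lipschitz. $\partial$ denotes the Clarke generalized gradient. For feasible $\bar x$, $I(\bar x)=\{i:g_i(\bar x)=0\}$. A feasible $\bar x$ is a (Clarke) stationary point of (P) if there are $\lambda_i\ge0$ ($i\in I(\bar x)$) and $\lambda_j\in\mathbb{R}$ ($j=p+1,\dots,q$) with $0\in\partial f(\bar x)+\sum_{i\in I(\bar x)}\lambda_i\partial g_i(\bar x)+\sum_{j=p+1}^q\lambda_j\partial h_j(\bar x)$. Smoothing: $\{f_\rho\},\{g^i_\rho\},\{h^j_\rho\}$ ($\rho>0$) are families of continuously differentiable functions with $\lim_{z\to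 x,\rho\uparrow\infty}f_\rho(z)=f(x)$ etc. for all $x$, and (standing assumption) each family has the gradient consistency property: for every $x$, the set of all limits $\lim_k\nabla f_{\rho_k}(z_k)$ with $z_k\to x$, $\rho_k\uparrow\infty$ is nonempty and contained in $\partial f(x)$ (similarly for $g^i_\rho$, $h^j_\rho$). Subproblem $(\mathrm{QP})_k$: minimize over $(d,\xi)\in\mathbb{R}^n\times\mathbb{R}$ the function $\nabla f_{\rho_k}(x_k)^Td+\frac12 d^TW_kd+r_k\xi$ subject to $g^i_{\rho_k}(x_k)+\nabla g^i_{\rho_k}(x_k)^Td\le\xi$ ($i=1,\dots,p$), $h^j_{\rho_k}(x_k)+\nabla h^j_{\rho_k}(x_k)^Td\le\xi$ and $-h^j_{\rho_k}(x_k)-\nabla h^j_{\rho_k}(x_k)^Td\le\xi$ ($j=p+1,\dots,q$), $\xi\ge0$. A solution $(d_k,\xi_k)$ comes with a Lagrange (KKT) multiplier $\lambda_k=(\lambda^g_k,\lambda^+_k,\lambda^-_k,\lambda^\xi_k)\ge0$ satisfying $0=\nabla f_{\rho_k}(x_k)+W_kd_k+\sum_i\lambda^g_{i,k}\nabla g^i_{\rho_k}(x_k)+\sum_j(\lambda^+_{j,k}-\lambda^-_{j,k})\nabla h^j_{\rho_k}(x_k)$, $r_k=\sum_i\lambda^g_{i,k}+\sum_j(\lambda^+_{j,k}+\lambda^-_{j,k})+\lambda^\xi_k$, and complementarity of each multiplier with its constraint. Merit function: $\theta_{\rho,r}(x)=f_\rho(x)+r\phi_\rho(x)$, $\phi_\rho(x)=\max\{0,g^i_\rho(x)\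 (i=1,\dots,p),|h^j_\rho(x)|\ (j=p+1,\dots,q)\}$; $\theta'(x;d)$ is the directional derivative. Algorithm 3.1: constants $\beta,\sigma_1,\sigma_2\in(0,1)$ with $\sigma_1\le\sigma_2$, $\sigma,\sigma',\hat\eta\in(1,\infty)$; initial $x_0$, $\rho_0>0$, $r_0>0$, symmetric positive definite $W_0$; $k:=0$. Step 1: solve $(\mathrm{QP})_k$ to get $(d_k,\xi_k)$ and multiplier $\lambda_k$. Step 2: if $\xi_k=0$ set $r_{k+1}=r_k$, else $r_{k+1}=\sigma'r_k$. Step 3: $x_{k+1}=x_k+\alpha_kd_k$ with $\alpha_k=\beta^l$, $l$ the smallest nonnegative integer with $\theta_{\rho_k,r_k}(x_{k+1})-\theta_{\rho_k,r_k}(x_k)\le-\sigma_1\alpha_kd_k^TW_kd_k$. If $\|d_k\|\le\hat\eta\rho_k^{-1}$, set $\rho_{k+1}=\sigma\rho_k$ and go to Step 4; otherwise set $\rho_{k+1}=\rho_k$ and go to Step 1. In either case choose a symmetric positive definite $W_{k+1}$ and set $k:=k+1$. Step 4: if a stopping criterion holds, terminate; otherwise go to Step 1. Assumption 3.1: there exist constants $0<m<M$ with $m\|d\|^2\le d^TW_kd\le M\|d\|^2$ for all $k$ and all $d\in\mathbb{R}^n$. *)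

theory Defs
  imports "HOL-Analysis.Analysis"
begin

definition loc_lipschitz :: "('a::metric_space \<Rightarrow> real) \<Rightarrow> bool" where
  "loc_lipschitz F \<longleftrightarrow>
     (\<forall>x. \<exists>e>0. \<exists>L. \<forall>y\<in>ball x e. \<forall>z\<in>ball x e. \<bar>F y - F z\<bar> \<le> L * dist y z)"

definition clarke_dir :: "('a::real_normed_vector \<Rightarrow> real) \<Rightarrow> 'a \<Rightarrow> 'a \<Rightarrow> ereal" where
  "clarke_dir F x v =
     Limsup (nhds x \<times>\<^sub>F at_right 0) (\<lambda>(y, t). ereal ((F (y + t *\<^sub>R v) - F y) / t))"

definition clarke_grad :: "('a::real_inner \<Rightarrow> real) \<Rightarrow> 'a \<Rightarrow> 'a set" where
  "clarke_grad F x = {\<zeta>. \<forall>v. ereal (\<zeta> \<bullet> v) \<le> clarke_dir F x v}"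

definition feasible_P :: "nat \<Rightarrow> nat \<Rightarrow> (nat \<Rightarrow> 'a \<Rightarrow> real) \<Rightarrow> (nat \<Rightarrow> 'a \<Rightarrow> real) \<Rightarrow> 'a \<Rightarrow> bool" where
  "feasible_P p q g h x \<longleftrightarrow> (\<forall>i\<in>{1..p}. g i x \<le> 0) \<and> (\<forall>j\<in>{p+1..q}. h j x = 0)"

definition active_set :: "nat \<Rightarrow> (nat \<Rightarrow> 'a \<Rightarrow> real) \<Rightarrow> 'a \<Rightarrow> nat set" where
  "active_set p g x = {i\<in>{1..p}. g i x = 0}"

definition clarke_stationary ::
  "nat \<Rightarrow> nat \<Rightarrow> ('a::real_inner \<Rightarrow> real) \<Rightarrow> (nat \<Rightarrow> 'a \<Rightarrow> real) \<Rightarrow> (nat \<Rightarrow> 'a \<Rightarrow> real) \<Rightarrow> 'a \<Rightarrow> bool" where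
  "clarke_stationary p q f g h x \<longleftrightarrow> feasible_P p q g h x \<and>
     (\<exists>lam mu \<zeta>f \<zeta>g \<zeta>h.
        \<zeta>f \<in> clarke_grad f x \<and>
        (\<forall>i\<in>active_set p g x. lam i \<ge> (0::real) \<and> \<zeta>g i \<in> clarke_grad (g i) x) \<and>
        (\<forall>j\<in>{p+1..q}. \<zeta>h j \<in> clarke_grad (h j) x) \<and>
        \<zeta>f + (\<Sum>i\<in>active_set p g x. lam i *\<^sub>R \<zeta>g i) + (\<Sum>j\<in>{p+1..q}. mu j *\<^sub>R \<zeta>h j) = 0)"

definition smoothing_family ::
  "('a::euclidean_space \<Rightarrow> real) \<Rightarrow> (real \<Rightarrow> 'a \<Rightarrow> real) \<Rightarrow> (real \<Rightarrow> 'a \<Rightarrow> 'a) \<Rightarrow> bool" where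
  "smoothing_family F Fs dFs \<longleftrightarrow>
     (\<forall>\<rho>>0. \<forall>x. (Fs \<rho> has_derivative (\<lambda>v. dFs \<rho> x \<bullet> v)) (at x)) \<and>
     (\<forall>\<rho>>0. continuous_on UNIV (dFs \<rho>)) \<and>
     (\<forall>x. ((\<lambda>(z, \<rho>). Fs \<rho> z) \<longlongrightarrow> F x) (nhds x \<times>\<^sub>F at_top))"

definition grad_limits :: "(real \<Rightarrow> 'a::euclidean_space \<Rightarrow> 'a) \<Rightarrow> 'a \<Rightarrow> 'a set" where
  "grad_limits dFs x = {v. \<exists>z \<rho>. z \<longlonglongrightarrow> x \<and> (\<forall>k. \<rho> k > 0) \<and> filterlim \<rho> at_top sequentially \<and>
                               (\<lambda>k. dFs (\<rho> k) (z k)) \<longlonglongrightarrow> v}"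

definition grad_consistent ::
  "('a::euclidean_space \<Rightarrow> real) \<Rightarrow> (real \<Rightarrow> 'a \<Rightarrow> 'a) \<Rightarrow> bool" where
  "grad_consistent F dFs \<longleftrightarrow> (\<forall>x. grad_limits dFs x \<noteq> {} \<and> grad_limits dFs x \<subseteq> clarke_grad F x)"

definition phi_s :: "nat \<Rightarrow> nat \<Rightarrow> (real \<Rightarrow> nat \<Rightarrow> 'a \<Rightarrow> real) \<Rightarrow> (real \<Rightarrow> nat \<Rightarrow> 'a \<Rightarrow> real) \<Rightarrow> real \<Rightarrow> 'a \<Rightarrow> real" where
  "phi_s p q gs hs \<rho> x =
     Max ({0} \<union> (\<lambda>i. gs \<rho> i x) ` {1..p} \<union> (\<lambda>j. \<bar>hs \<rho> j x\<bar>) ` {p+1..q})"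

definition theta_s :: "nat \<Rightarrow> nat \<Rightarrow> (real \<Rightarrow> 'a \<Rightarrow> real) \<Rightarrow> (real \<Rightarrow> nat \<Rightarrow> 'a \<Rightarrow> real) \<Rightarrow> (real \<Rightarrow> nat \<Rightarrow> 'a \<Rightarrow> real)
                        \<Rightarrow> real \<Rightarrow> real \<Rightarrow> 'a \<Rightarrow> real" where
  "theta_s p q fs gs hs \<rho> r x = fs \<rho> x + r * phi_s p q gs hs \<rho> x"

definition qp_feasible ::
  "nat \<Rightarrow> nat \<Rightarrow> (real \<Rightarrow> nat \<Rightarrow> 'a \<Rightarrow> real) \<Rightarrow> (real \<Rightarrow> nat \<Rightarrow> 'a \<Rightarrow> 'a) \<Rightarrow>
   (real \<Rightarrow> nat \<Rightarrow> 'a \<Rightarrow> real) \<Rightarrow> (real \<Rightarrow> nat \<Rightarrow> 'a \<Rightarrow> 'a) \<Rightarrow> real \<Rightarrow> 'a::real_inner \<Rightarrow> 'a \<Rightarrow> real \<Rightarrow> bool" where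
  "qp_feasible p q gs dgs hs dhs \<rho> x d \<xi> \<longleftrightarrow>
     (\<forall>i\<in>{1..p}. gs \<rho> i x + dgs \<rho> i x \<bullet> d \<le> \<xi>) \<and>
     (\<forall>j\<in>{p+1..q}. hs \<rho> j x + dhs \<rho> j x \<bullet> d \<le> \<xi> \<and> - hs \<rho> j x - dhs \<rho> j x \<bullet> d \<le> \<xi>) \<and>
     \<xi> \<ge> 0"

definition qp_obj :: "(real \<Rightarrow> real ^ ('n::finite) \<Rightarrow> real ^ 'n) \<Rightarrow> real \<Rightarrow> real ^ 'n \<Rightarrow> real ^ 'n ^ 'n \<Rightarrow> real
                       \<Rightarrow> real ^ 'n \<Rightarrow> real \<Rightarrow> real" where
  "qp_obj dfs \<rho> x W r d \<xi> = dfs \<rho> x \<bullet> d + 1/2 * (d \<bullet> (W *v d)) + r * \<xi>"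

end

theory Submission
  imports Defs
begin

text \<open>
  The maximum in \<open>\<phi>\<^sub>\<rho>\<close> is differentiated at one of its active pieces, whose derivative is at most
  \<open>\<xi>\<^sub>k - \<phi>\<^sub>\<rho>(x\<^sub>k)\<close> by feasibility in \<open>(QP)\<^sub>k\<close>; testing the KKT equation of \<open>(QP)\<^sub>k\<close>
  with \<open>d\<^sub>k\<close> then bounds the derivative by \<open>-d\<^sub>k\<^sup>T W\<^sub>k d\<^sub>k\<close>.

  Part (2): a bounded penalty sequence forces \<open>\<xi>\<^sub>k = 0\<close> eventually. If only finitely many steps were
  small, \<open>\<rho>\<^sub>k\<close> and \<open>r\<^sub>k\<close> would freeze and \<open>d\<^sub>k\<^sup>T W\<^sub>k d\<^sub>k\<close> would stay away from zero; the
  Armijo decrease then makes the step sizes summable, and the rejection of the previous trial step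
  \<open>\<alpha>\<^sub>k/\<beta>\<close> contradicts a first-order estimate of the merit increment that is uniform along the
  bounded iterates. Hence \<open>\<rho>\<^sub>k \<rightarrow> \<infinity>\<close> and the small directions tend to zero. Gradients of the
  smoothing functions stay bounded along convergent sequences, so along a subsequence all gradients
  and multipliers converge; gradient consistency places the limit gradients in the Clarke gradients,
  and the KKT system of \<open>(QP)\<^sub>k\<close> passes to the Clarke stationarity system in the limit.
\<close>

section \<open>One-sided derivatives\<close>

lemma right_deriv_max_of_gt:
  fixes u v :: "real \<Rightarrow> real"
  assumes u: "(u has_real_derivative a) (at_right 0)" and v: "(v has_real_derivative b) (at_right 0)"
    and gt: "v 0 < u 0"
  shows "((\<lambda>t. max (u t) (v t)) has_real_derivative a) (at_right 0)"
proof -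
  have "((\<lambda>t. u t - v t) \<longlongrightarrow> u 0 - v 0) (at_right 0)"
    using DERIV_continuous[OF u] DERIV_continuous[OF v]
    by (intro tendsto_intros) (auto simp: continuous_within)
  then have "eventually (\<lambda>t. v t < u t) (at_right 0)"
    using order_tendstoD(1)[of _ "u 0 - v 0" _ 0] gt by force
  then have "eventually (\<lambda>t. u t = max (u t) (v t)) (at_right 0)"
    by eventually_elim auto
  with u gt show ?thesis
    using has_field_derivative_cong_eventually[of u "\<lambda>t. max (u t) (v t)" 0 "{0<..}"] by simp
qed

lemma right_deriv_max:
  fixes u v :: "real \<Rightarrow> real"
  assumes u: "(u has_real_derivative a) (at_right 0)" and v: "(v has_real_derivative b) (at_right 0)"
  shows "((\<lambda>t. max (u t) (v t)) has_real_derivative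
           (if v 0 < u 0 then a else if u 0 < v 0 then b else max a b)) (at_right 0)"
proof -
  consider "v 0 < u 0" | "u 0 < v 0" | "u 0 = v 0" by linarith
  then show ?thesis
  proof cases
    case 1
    then show ?thesis using right_deriv_max_of_gt[OF u v] by simp
  next
    case 2
    then show ?thesis using right_deriv_max_of_gt[OF v u] by (simp add: max.commute)
  next
    case 3
    have "((\<lambda>t. max ((u t - u 0) / (t - 0)) ((v t - v 0) / (t - 0))) \<longlongrightarrow> max a b) (at_right 0)"
      using u v unfolding has_field_derivative_iff by (intro tendsto_max)
    moreover have "eventually (\<lambda>t. max ((u t - u 0) / (t - 0)) ((v t - v 0) / (t - 0))
        = (max (u t) (v t) - max (u 0) (v 0)) / (t - 0)) (at_right 0)"
      using eventually_at_right_less[of "0::real"]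
      by eventually_elim (use 3 in \<open>auto simp: max_def divide_le_cancel\<close>)
    ultimately show ?thesis
      using 3 unfolding has_field_derivative_iff by (auto intro: Lim_transform_eventually)
  qed
qed

lemma right_deriv_abs:
  fixes u :: "real \<Rightarrow> real"
  assumes "(u has_real_derivative a) (at_right 0)"
  shows "((\<lambda>t. \<bar>u t\<bar>) has_real_derivative
           (if 0 < u 0 then a else if u 0 < 0 then - a else \<bar>a\<bar>)) (at_right 0)"
proof -
  have "(\<lambda>t. max (u t) (- u t)) = (\<lambda>t. \<bar>u t\<bar>)" by auto
  moreover have "(if - u 0 < u 0 then a else if u 0 < - u 0 then - a else max a (- a))
      = (if 0 < u 0 then a else if u 0 < 0 then - a else \<bar>a\<bar>)" by auto
  ultimately show ?thesis
    using right_deriv_max[OF assms DERIV_minus[OF assms]] by simp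
qed

lemma right_deriv_Max:
  fixes c :: "'i \<Rightarrow> real \<Rightarrow> real"
  assumes "finite J" "J \<noteq> {}" "\<And>j. j \<in> J \<Longrightarrow> (c j has_real_derivative a j) (at_right 0)"
  shows "\<exists>j\<in>J. c j 0 = Max ((\<lambda>j. c j 0) ` J) \<and>
           ((\<lambda>t. Max ((\<lambda>j. c j t) ` J)) has_real_derivative a j) (at_right 0)"
  using assms
proof (induction J rule: finite_ne_induct)
  case (singleton j)
  then show ?case by simp
next
  case (insert j J)
  then obtain i where i: "i \<in> J" "c i 0 = Max ((\<lambda>j. c j 0) ` J)"
    and di: "((\<lambda>t. Max ((\<lambda>j. c j t) ` J)) has_real_derivative a i) (at_right 0)"
    by auto
  have Max_insert: "(\<lambda>t. Max ((\<lambda>j. c j t) ` insert j J)) = (\<lambda>t. max (c j t) (Max ((\<lambda>j. c j t) ` J)))"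
    using insert.hyps by simp
  have dj: "(c j has_real_derivative a j) (at_right 0)" using insert.prems by simp
  have dmax: "((\<lambda>t. Max ((\<lambda>j. c j t) ` insert j J)) has_real_derivative
      (if c i 0 < c j 0 then a j else if c j 0 < c i 0 then a i else max (a j) (a i))) (at_right 0)"
    using right_deriv_max[OF dj di] unfolding Max_insert i(2)[symmetric] .
  have active: "c k 0 = Max ((\<lambda>j. c j 0) ` insert j J) \<longleftrightarrow> c k 0 = max (c j 0) (c i 0)" for k
    using fun_cong[OF Max_insert, of 0] i(2) by simp
  consider "c i 0 < c j 0" | "c j 0 < c i 0" | "c j 0 = c i 0" "a i \<le> a j" | "c j 0 = c i 0" "a j \<le> a i"
    by linarith
  then show ?case
  proof cases
    case 1
    then show ?thesis using dmax active by (intro bexI[of _ j]) auto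
  next
    case 2
    then show ?thesis using dmax active i(1) by (intro bexI[of _ i]) auto
  next
    case 3
    then show ?thesis using dmax active by (intro bexI[of _ j]) (auto simp: max_def)
  next
    case 4
    then show ?thesis using dmax active i(1) by (intro bexI[of _ i]) (auto simp: max_def)
  qed
qed

lemma has_real_derivative_along_line:
  assumes "(F has_derivative (\<lambda>v. G \<bullet> v)) (at (X + s *\<^sub>R D))"
  shows "((\<lambda>t. F (X + t *\<^sub>R D)) has_real_derivative (G \<bullet> D)) (at s)"
proof -
  have "((\<lambda>t. X + t *\<^sub>R D) has_derivative (\<lambda>t. t *\<^sub>R D)) (at s)"
    by (auto intro!: derivative_eq_intros)
  from has_derivative_compose[OF this assms]
  show ?thesis by (simp add: has_field_derivative_def mult.commute[of _ "G \<bullet> D"])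
qed

lemma right_deriv_along_line:
  assumes "(F has_derivative (\<lambda>v. G \<bullet> v)) (at x)"
  shows "((\<lambda>t. F (x + t *\<^sub>R d)) has_real_derivative G \<bullet> d) (at_right 0)"
  using has_real_derivative_along_line[of F G x 0 d] assms by (simp add: has_field_derivative_at_within)

section \<open>The penalty merit function along a QP direction\<close>

text \<open>The KKT system of \<open>(QP)\<close> at \<open>x\<close>, with \<open>w\<close> standing for \<open>W d\<close> and \<open>lg, lp, lm, lxi\<close> the
  multipliers of the constraints \<open>g\<^sub>i\<close>, \<open>+h\<^sub>j\<close>, \<open>-h\<^sub>j\<close> and \<open>\<xi> \<ge> 0\<close>.\<close>

definition qp_kkt ::
  "nat \<Rightarrow> nat \<Rightarrow> (real \<Rightarrow> nat \<Rightarrow> 'a \<Rightarrow> real) \<Rightarrow> (real \<Rightarrow> nat \<Rightarrow> 'a \<Rightarrow> 'a) \<Rightarrow>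
   (real \<Rightarrow> nat \<Rightarrow> 'a \<Rightarrow> real) \<Rightarrow> (real \<Rightarrow> nat \<Rightarrow> 'a \<Rightarrow> 'a) \<Rightarrow> (real \<Rightarrow> 'a \<Rightarrow> 'a) \<Rightarrow>
   real \<Rightarrow> 'a::real_inner \<Rightarrow> 'a \<Rightarrow> 'a \<Rightarrow> real \<Rightarrow> real \<Rightarrow>
   (nat \<Rightarrow> real) \<Rightarrow> (nat \<Rightarrow> real) \<Rightarrow> (nat \<Rightarrow> real) \<Rightarrow> real \<Rightarrow> bool" where
  "qp_kkt p q gs dgs hs dhs dfs \<rho> x w d \<xi> r lg lp lm lxi \<longleftrightarrow>
     (\<forall>i\<in>{1..p}. lg i \<ge> 0) \<and> (\<forall>j\<in>{p+1..q}. lp j \<ge> 0 \<and> lm j \<ge> 0) \<and> lxi \<ge> 0 \<and>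
     dfs \<rho> x + w + (\<Sum>i\<in>{1..p}. lg i *\<^sub>R dgs \<rho> i x) + (\<Sum>j\<in>{p+1..q}. (lp j - lm j) *\<^sub>R dhs \<rho> j x) = 0 \<and>
     r = (\<Sum>i\<in>{1..p}. lg i) + (\<Sum>j\<in>{p+1..q}. lp j + lm j) + lxi \<and>
     (\<forall>i\<in>{1..p}. lg i * (gs \<rho> i x + dgs \<rho> i x \<bullet> d - \<xi>) = 0) \<and>
     (\<forall>j\<in>{p+1..q}. lp j * (hs \<rho> j x + dhs \<rho> j x \<bullet> d - \<xi>) = 0 \<and>
                    lm j * (- hs \<rho> j x - dhs \<rho> j x \<bullet> d - \<xi>) = 0) \<and>
     lxi * \<xi> = 0"

lemma qp_kkt_penalty_nonneg:
  "qp_kkt p q gs dgs hs dhs dfs \<rho> x w d \<xi> r lg lp lm lxi \<Longrightarrow> 0 \<le> r"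
  unfolding qp_kkt_def by (auto intro!: add_nonneg_nonneg sum_nonneg)

lemma phi_s_ge:
  shows "i \<in> {1..p} \<Longrightarrow> gs \<rho> i y \<le> phi_s p q gs hs \<rho> y"
    and "j \<in> {p+1..q} \<Longrightarrow> \<bar>hs \<rho> j y\<bar> \<le> phi_s p q gs hs \<rho> y"
    and "0 \<le> phi_s p q gs hs \<rho> y"
  unfolding phi_s_def by (rule Max_ge; auto)+

lemma qp_feasible_zero_direction:
  "qp_feasible p q gs dgs hs dhs \<rho> x 0 (phi_s p q gs hs \<rho> x)"
  unfolding qp_feasible_def
  using phi_s_ge(1)[of _ p gs \<rho> x q hs] phi_s_ge(2)[of _ p q hs \<rho> x gs] phi_s_ge(3)[of p q gs hs \<rho> x]
  by (auto simp: abs_le_iff)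

lemma qp_kkt_descent:
  assumes "qp_kkt p q gs dgs hs dhs dfs \<rho> x w d \<xi> r lg lp lm lxi"
  shows "dfs \<rho> x \<bullet> d + r * (\<xi> - phi_s p q gs hs \<rho> x) \<le> - (d \<bullet> w)"
proof -
  define ph where "ph = phi_s p q gs hs \<rho> x"
  note kkt = assms[unfolded qp_kkt_def]
  have "(dfs \<rho> x + w + (\<Sum>i\<in>{1..p}. lg i *\<^sub>R dgs \<rho> i x)
         + (\<Sum>j\<in>{p+1..q}. (lp j - lm j) *\<^sub>R dhs \<rho> j x)) \<bullet> d = 0"
    using kkt by simp
  then have stat: "dfs \<rho> x \<bullet> d + w \<bullet> d + (\<Sum>i\<in>{1..p}. lg i * (dgs \<rho> i x \<bullet> d))
      + (\<Sum>j\<in>{p+1..q}. (lp j - lm j) * (dhs \<rho> j x \<bullet> d)) = 0"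
    by (simp add: inner_add_left inner_sum_left)
  have ineq: "(\<Sum>i\<in>{1..p}. lg i * (\<xi> - ph)) \<le> (\<Sum>i\<in>{1..p}. lg i * (dgs \<rho> i x \<bullet> d))"
  proof (rule sum_mono)
    fix i assume i: "i \<in> {1..p}"
    have "lg i * (gs \<rho> i x + dgs \<rho> i x \<bullet> d - \<xi>) = 0" using kkt i by blast
    then have "lg i * (dgs \<rho> i x \<bullet> d) = lg i * (\<xi> - gs \<rho> i x)" by algebra
    also have "lg i * (\<xi> - ph) \<le> \<dots>"
      using kkt i phi_s_ge(1)[OF i] by (intro mult_left_mono) (auto simp: ph_def)
    finally show "lg i * (\<xi> - ph) \<le> lg i * (dgs \<rho> i x \<bullet> d)" .
  qed
  have eq: "(\<Sum>j\<in>{p+1..q}. (lp j + lm j) * (\<xi> - ph)) \<le> (\<Sum>j\<in>{p+1..q}. (lp j - lm j) * (dhs \<rho> j x \<bullet> d))"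
  proof (rule sum_mono)
    fix j assume j: "j \<in> {p+1..q}"
    have "lp j * (hs \<rho> j x + dhs \<rho> j x \<bullet> d - \<xi>) = 0" "lm j * (- hs \<rho> j x - dhs \<rho> j x \<bullet> d - \<xi>) = 0"
      using kkt j by blast+
    then have "(lp j - lm j) * (dhs \<rho> j x \<bullet> d) = lp j * (\<xi> - hs \<rho> j x) + lm j * (\<xi> + hs \<rho> j x)"
      by algebra
    also have "lp j * (\<xi> - ph) + lm j * (\<xi> - ph) \<le> \<dots>"
      using kkt j phi_s_ge(2)[OF j, of hs \<rho> x gs] by (intro add_mono mult_left_mono) (auto simp: ph_def abs_le_iff)
    finally show "(lp j + lm j) * (\<xi> - ph) \<le> (lp j - lm j) * (dhs \<rho> j x \<bullet> d)"
      by (simp add: algebra_simps)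
  qed
  have "r * (\<xi> - ph) = (\<Sum>i\<in>{1..p}. lg i * (\<xi> - ph)) + (\<Sum>j\<in>{p+1..q}. (lp j + lm j) * (\<xi> - ph))
      + lxi * (\<xi> - ph)"
    using kkt by (simp add: sum_distrib_right distrib_right)
  moreover have "lxi * (\<xi> - ph) \<le> 0"
  proof -
    have "lxi * \<xi> = 0" "0 \<le> lxi" using kkt by auto
    then show ?thesis using phi_s_ge(3)[of p q gs hs \<rho> x] by (auto simp: ph_def right_diff_distrib)
  qed
  ultimately show ?thesis using stat ineq eq inner_commute[of d w] unfolding ph_def by linarith
qed

lemma phi_s_eq_Max:
  assumes "p \<le> q"
  shows "phi_s p q gs hs \<rho> y =
    Max ((\<lambda>j. if j = 0 then 0 else if j \<le> p then gs \<rho> j y else \<bar>hs \<rho> j y\<bar>) ` {0..q})"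
proof -
  have "{0..q} = {0} \<union> {1..p} \<union> {p+1..q}" using assms by auto
  then have "(\<lambda>j. if j = 0 then 0 else if j \<le> p then gs \<rho> j y else \<bar>hs \<rho> j y\<bar>) ` {0..q}
      = {0} \<union> (\<lambda>i. gs \<rho> i y) ` {1..p} \<union> (\<lambda>j. \<bar>hs \<rho> j y\<bar>) ` {p+1..q}"
    by (auto simp: image_Un intro!: image_cong)
  then show ?thesis by (simp add: phi_s_def)
qed

lemma phi_s_right_deriv_le:
  assumes pq: "p \<le> q"
    and dg: "\<forall>i\<in>{1..p}. (gs \<rho> i has_derivative (\<lambda>v. dgs \<rho> i x \<bullet> v)) (at x)"
    and dh: "\<forall>j\<in>{p+1..q}. (hs \<rho> j has_derivative (\<lambda>v. dhs \<rho> j x \<bullet> v)) (at x)"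
    and feas: "qp_feasible p q gs dgs hs dhs \<rho> x d \<xi>"
  shows "\<exists>D. ((\<lambda>t. phi_s p q gs hs \<rho> (x + t *\<^sub>R d)) has_real_derivative D) (at_right 0)
           \<and> D \<le> \<xi> - phi_s p q gs hs \<rho> x"
proof -
  define c where "c j = (\<lambda>t. if j = 0 then 0 else if j \<le> p then gs \<rho> j (x + t *\<^sub>R d)
                           else \<bar>hs \<rho> j (x + t *\<^sub>R d)\<bar>)" for j
  define a where "a j = (if j = 0 then 0 else if j \<le> p then dgs \<rho> j x \<bullet> d
      else if 0 < hs \<rho> j x then dhs \<rho> j x \<bullet> d else if hs \<rho> j x < 0 then - (dhs \<rho> j x \<bullet> d)
      else \<bar>dhs \<rho> j x \<bullet> d\<bar>)" for j
  have dc: "(c j has_real_derivative a j) (at_right 0)" if j: "j \<in> {0..q}" for j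
  proof -
    consider "j = 0" | "j \<in> {1..p}" | "j \<in> {p+1..q}" using j by fastforce
    then show ?thesis
    proof cases
      case 1
      then show ?thesis by (simp add: c_def a_def)
    next
      case 2
      then have "((\<lambda>t. gs \<rho> j (x + t *\<^sub>R d)) has_real_derivative dgs \<rho> j x \<bullet> d) (at_right 0)"
        using right_deriv_along_line dg by blast
      then show ?thesis using 2 by (simp add: c_def a_def)
    next
      case 3
      then have "((\<lambda>t. hs \<rho> j (x + t *\<^sub>R d)) has_real_derivative dhs \<rho> j x \<bullet> d) (at_right 0)"
        using right_deriv_along_line dh by blast
      from right_deriv_abs[OF this] show ?thesis using 3 by (simp add: c_def a_def cong: if_cong)
    qed
  qed
  have phi_line: "phi_s p q gs hs \<rho> (x + t *\<^sub>R d) = Max ((\<lambda>j. c j t) ` {0..q})" for t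
    by (simp add: phi_s_eq_Max[OF pq] c_def)
  obtain j where j: "j \<in> {0..q}" and act: "c j 0 = Max ((\<lambda>j. c j 0) ` {0..q})"
    and dphi: "((\<lambda>t. Max ((\<lambda>j. c j t) ` {0..q})) has_real_derivative a j) (at_right 0)"
    using right_deriv_Max[of "{0..q}" c a] dc by auto
  have "Max ((\<lambda>j. c j 0) ` {0..q}) = phi_s p q gs hs \<rho> x" using phi_line[of 0] by simp
  note act = act[unfolded this] and dphi = dphi[folded phi_line]
  consider "j = 0" | "j \<in> {1..p}" | "j \<in> {p+1..q}" using j by fastforce
  then have "a j \<le> \<xi> - phi_s p q gs hs \<rho> x"
  proof cases
    case 1
    then show ?thesis using act feas by (simp add: c_def a_def qp_feasible_def)
  next
    case 2
    then have "gs \<rho> j x + dgs \<rho> j x \<bullet> d \<le> \<xi>" using feas by (auto simp: qp_feasible_def)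
    then show ?thesis using act 2 by (auto simp: c_def a_def)
  next
    case 3
    then have "hs \<rho> j x + dhs \<rho> j x \<bullet> d \<le> \<xi>" "- hs \<rho> j x - dhs \<rho> j x \<bullet> d \<le> \<xi>"
      using feas by (auto simp: qp_feasible_def)
    then show ?thesis using act 3 by (auto simp: c_def a_def)
  qed
  with dphi show ?thesis by blast
qed

lemma theta_s_right_deriv_le:
  assumes pq: "p \<le> q"
    and df: "(fs \<rho> has_derivative (\<lambda>v. dfs \<rho> x \<bullet> v)) (at x)"
    and dg: "\<forall>i\<in>{1..p}. (gs \<rho> i has_derivative (\<lambda>v. dgs \<rho> i x \<bullet> v)) (at x)"
    and dh: "\<forall>j\<in>{p+1..q}. (hs \<rho> j has_derivative (\<lambda>v. dhs \<rho> j x \<bullet> v)) (at x)"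
    and feas: "qp_feasible p q gs dgs hs dhs \<rho> x d \<xi>"
    and kkt: "qp_kkt p q gs dgs hs dhs dfs \<rho> x w d \<xi> r lg lp lm lxi"
  shows "\<exists>D. ((\<lambda>t. theta_s p q fs gs hs \<rho> r (x + t *\<^sub>R d)) has_real_derivative D) (at_right 0)
           \<and> D \<le> - (d \<bullet> w)"
proof -
  obtain D where dphi: "((\<lambda>t. phi_s p q gs hs \<rho> (x + t *\<^sub>R d)) has_real_derivative D) (at_right 0)"
    and D: "D \<le> \<xi> - phi_s p q gs hs \<rho> x"
    using phi_s_right_deriv_le[OF pq dg dh feas] by blast
  have "0 \<le> r" using kkt by (rule qp_kkt_penalty_nonneg)
  with D have "dfs \<rho> x \<bullet> d + r * D \<le> - (d \<bullet> w)"
    using qp_kkt_descent[OF kkt] by (smt (verit) mult_left_mono)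
  moreover have "((\<lambda>t. theta_s p q fs gs hs \<rho> r (x + t *\<^sub>R d)) has_real_derivative dfs \<rho> x \<bullet> d + r * D)
      (at_right 0)"
    unfolding theta_s_def by (intro DERIV_add DERIV_cmult right_deriv_along_line df dphi)
  ultimately show ?thesis by blast
qed

lemma phi_s_along_le:
  assumes feas: "qp_feasible p q gs dgs hs dhs \<rho> x d \<xi>" and t: "0 \<le> t" "t \<le> 1" and e: "0 \<le> e"
    and eg: "\<forall>i\<in>{1..p}. \<bar>gs \<rho> i (x + t *\<^sub>R d) - gs \<rho> i x - t * (dgs \<rho> i x \<bullet> d)\<bar> \<le> e"
    and eh: "\<forall>j\<in>{p+1..q}. \<bar>hs \<rho> j (x + t *\<^sub>R d) - hs \<rho> j x - t * (dhs \<rho> j x \<bullet> d)\<bar> \<le> e"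
  shows "phi_s p q gs hs \<rho> (x + t *\<^sub>R d) \<le> (1 - t) * phi_s p q gs hs \<rho> x + t * \<xi> + e"
proof -
  define ph where "ph = phi_s p q gs hs \<rho> x"
  have "0 \<le> ph" "0 \<le> \<xi>" using feas phi_s_ge(3) by (auto simp: ph_def qp_feasible_def)
  moreover have "gs \<rho> i (x + t *\<^sub>R d) \<le> (1 - t) * ph + t * \<xi> + e" if i: "i \<in> {1..p}" for i
  proof -
    have "gs \<rho> i x + t * (dgs \<rho> i x \<bullet> d) = (1 - t) * gs \<rho> i x + t * (gs \<rho> i x + dgs \<rho> i x \<bullet> d)"
      by (simp add: algebra_simps)
    also have "\<dots> \<le> (1 - t) * ph + t * \<xi>"
      using feas i t phi_s_ge(1)[OF i] by (intro add_mono mult_left_mono) (auto simp: ph_def qp_feasible_def)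
    moreover have "gs \<rho> i (x + t *\<^sub>R d) - gs \<rho> i x - t * (dgs \<rho> i x \<bullet> d) \<le> e"
      using eg i by (simp add: abs_le_iff)
    ultimately show ?thesis by linarith
  qed
  moreover have "\<bar>hs \<rho> j (x + t *\<^sub>R d)\<bar> \<le> (1 - t) * ph + t * \<xi> + e" if j: "j \<in> {p+1..q}" for j
  proof -
    have "\<bar>hs \<rho> j x + t * (dhs \<rho> j x \<bullet> d)\<bar> = \<bar>(1 - t) * hs \<rho> j x + t * (hs \<rho> j x + dhs \<rho> j x \<bullet> d)\<bar>"
      by (simp add: algebra_simps)
    also have "\<dots> \<le> (1 - t) * \<bar>hs \<rho> j x\<bar> + t * \<bar>hs \<rho> j x + dhs \<rho> j x \<bullet> d\<bar>"
      using t by (simp add: abs_triangle_ineq[THEN order_trans] abs_mult)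
    also have "\<dots> \<le> (1 - t) * ph + t * \<xi>"
      using feas j t phi_s_ge(2)[OF j, of hs \<rho> x gs]
      by (intro add_mono mult_left_mono) (auto simp: ph_def qp_feasible_def abs_le_iff)
    moreover have "\<bar>hs \<rho> j (x + t *\<^sub>R d) - hs \<rho> j x - t * (dhs \<rho> j x \<bullet> d)\<bar> \<le> e"
      using eh j by blast
    ultimately show ?thesis by linarith
  qed
  ultimately show ?thesis
    unfolding ph_def[symmetric] phi_s_def[of p q gs hs \<rho> "x + t *\<^sub>R d"] using t e
    by (auto simp: Max_le_iff)
qed

lemma theta_s_increment_le:
  assumes feas: "qp_feasible p q gs dgs hs dhs \<rho> x d \<xi>"
    and kkt: "qp_kkt p q gs dgs hs dhs dfs \<rho> x w d \<xi> r lg lp lm lxi"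
    and t: "0 \<le> t" "t \<le> 1" and \<epsilon>: "0 \<le> \<epsilon>"
    and ef: "\<bar>fs \<rho> (x + t *\<^sub>R d) - fs \<rho> x - t * (dfs \<rho> x \<bullet> d)\<bar> \<le> t * \<epsilon>"
    and eg: "\<forall>i\<in>{1..p}. \<bar>gs \<rho> i (x + t *\<^sub>R d) - gs \<rho> i x - t * (dgs \<rho> i x \<bullet> d)\<bar> \<le> t * \<epsilon>"
    and eh: "\<forall>j\<in>{p+1..q}. \<bar>hs \<rho> j (x + t *\<^sub>R d) - hs \<rho> j x - t * (dhs \<rho> j x \<bullet> d)\<bar> \<le> t * \<epsilon>"
  shows "theta_s p q fs gs hs \<rho> r (x + t *\<^sub>R d) - theta_s p q fs gs hs \<rho> r x \<le> t * (\<epsilon> * (1 + r) - d \<bullet> w)"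
proof -
  define ph where "ph = phi_s p q gs hs \<rho> x"
  have r: "0 \<le> r" using kkt by (rule qp_kkt_penalty_nonneg)
  have "phi_s p q gs hs \<rho> (x + t *\<^sub>R d) - ph \<le> t * (\<xi> - ph) + t * \<epsilon>"
    using phi_s_along_le[OF feas t _ eg eh] t \<epsilon> by (simp add: ph_def algebra_simps)
  then have "theta_s p q fs gs hs \<rho> r (x + t *\<^sub>R d) - theta_s p q fs gs hs \<rho> r x
      \<le> (t * (dfs \<rho> x \<bullet> d) + t * \<epsilon>) + r * (t * (\<xi> - ph) + t * \<epsilon>)"
    using ef r unfolding theta_s_def ph_def
    by (smt (verit, best) abs_le_iff mult_left_mono right_diff_distrib)
  also have "\<dots> = t * (dfs \<rho> x \<bullet> d + r * (\<xi> - ph)) + t * (\<epsilon> * (1 + r))"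
    by (simp add: algebra_simps)
  also have "\<dots> \<le> t * (- (d \<bullet> w)) + t * (\<epsilon> * (1 + r))"
    using mult_left_mono[OF qp_kkt_descent[OF kkt] t(1)] by (simp add: ph_def)
  finally show ?thesis by (simp add: algebra_simps)
qed

section \<open>Lipschitz functions and Clarke stationarity\<close>

lemma loc_lipschitz_imp_lipschitz_on_ball:
  assumes "loc_lipschitz F"
  obtains e L where "0 < e" "0 \<le> L" "L-lipschitz_on (ball x e) F"
proof -
  obtain e L where "0 < e" and L: "\<forall>y\<in>ball x e. \<forall>z\<in>ball x e. \<bar>F y - F z\<bar> \<le> L * dist y z"
    using assms unfolding loc_lipschitz_def by blast
  have "\<bar>L\<bar>-lipschitz_on (ball x e) F"
  proof (rule lipschitz_onI)
    fix y z assume "y \<in> ball x e" "z \<in> ball x e"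
    then have "\<bar>F y - F z\<bar> \<le> L * dist y z" using L by blast
    also have "\<dots> \<le> \<bar>L\<bar> * dist y z" by (simp add: mult_right_mono)
    finally show "dist (F y) (F z) \<le> \<bar>L\<bar> * dist y z" by (simp add: dist_real_def)
  qed simp
  with \<open>0 < e\<close> show ?thesis using that[of e "\<bar>L\<bar>"] by simp
qed

lemma loc_lipschitz_continuous: "loc_lipschitz F \<Longrightarrow> continuous_on UNIV F"
proof (rule continuous_at_imp_continuous_on, rule ballI)
  fix x assume "loc_lipschitz F"
  then obtain e L where "0 < e" "L-lipschitz_on (ball x e) F"
    by (rule loc_lipschitz_imp_lipschitz_on_ball)
  then show "isCont F x"
    using continuous_on_interior[OF lipschitz_on_continuous_on, of L "ball x e" F x] by simp
qed

lemma clarke_dir_le_lipschitz: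
  fixes F :: "'a::real_normed_vector \<Rightarrow> real"
  assumes e: "0 < e" and L: "L-lipschitz_on (ball x e) F"
  shows "clarke_dir F x v \<le> ereal (L * norm v)"
  unfolding clarke_dir_def
proof (rule Limsup_bounded, unfold eventually_prod_filter, intro exI conjI allI impI)
  show "eventually (\<lambda>y. dist y x < e / 2) (nhds x)"
    unfolding eventually_nhds_metric using e by (intro exI[of _ "e / 2"]) auto
  show "eventually (\<lambda>t. 0 < t \<and> t * (norm v + 1) < e / 2) (at_right (0::real))"
  proof -
    have "0 < e / (2 * (norm v + 1))" using e by (simp add: add_nonneg_pos)
    moreover have "t * (norm v + 1) < e / 2" if "t < e / (2 * (norm v + 1))" for t
      using that by (simp add: less_divide_eq add_nonneg_pos mult.commute mult.left_commute)
    ultimately show ?thesis unfolding eventually_at_right_field by blast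
  qed
  fix y and t :: real
  assume y: "dist y x < e / 2" and t: "0 < t \<and> t * (norm v + 1) < e / 2"
  have "t * norm v < e / 2" using t by (simp add: distrib_left)
  moreover have "dist (y + t *\<^sub>R v) x \<le> t * norm v + dist y x"
    using dist_triangle[of "y + t *\<^sub>R v" x y] t by (simp add: dist_norm)
  ultimately have "dist (y + t *\<^sub>R v) x < e" using y by linarith
  then have "dist (F (y + t *\<^sub>R v)) (F y) \<le> L * dist (y + t *\<^sub>R v) y"
    using y e by (intro lipschitz_onD[OF L]) (auto simp: dist_commute)
  then have "F (y + t *\<^sub>R v) - F y \<le> t * (L * norm v)"
    using t by (simp add: dist_norm dist_real_def abs_le_iff algebra_simps)
  then show "(\<lambda>(y, t). ereal ((F (y + t *\<^sub>R v) - F y) / t)) (y, t) \<le> ereal (L * norm v)"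
    using t by (simp add: divide_le_eq mult.commute)
qed

lemma norm_le_of_clarke_grad:
  fixes F :: "'a::real_inner \<Rightarrow> real"
  assumes "0 < e" "L-lipschitz_on (ball x e) F" "\<zeta> \<in> clarke_grad F x"
  shows "norm \<zeta> \<le> L"
proof -
  have "ereal (\<zeta> \<bullet> \<zeta>) \<le> ereal (L * norm \<zeta>)"
    using assms(3) clarke_dir_le_lipschitz[OF assms(1,2)] unfolding clarke_grad_def
    by (blast intro: order_trans)
  then have "norm \<zeta> * norm \<zeta> \<le> L * norm \<zeta>"
    by (simp add: power2_norm_eq_inner[symmetric] power2_eq_square)
  then show ?thesis by (cases "norm \<zeta> = 0") (auto simp: lipschitz_on_nonneg[OF assms(2)])
qed

lemma clarke_stationaryI:
  assumes pq: "p \<le> q" and feas: "feasible_P p q g h x"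
    and grads: "\<zeta> 0 \<in> clarke_grad f x" "\<forall>i\<in>{1..p}. \<zeta> i \<in> clarke_grad (g i) x"
      "\<forall>j\<in>{p+1..q}. \<zeta> j \<in> clarke_grad (h j) x"
    and mult: "m 0 = 1" "\<forall>i\<in>{1..p}. 0 \<le> m i \<and> (g i x < 0 \<longrightarrow> m i = 0)"
    and sum: "(\<Sum>j\<in>{0..q}. m j *\<^sub>R \<zeta> j) = 0"
  shows "clarke_stationary p q f g h x"
proof -
  have split: "{0..q} = insert 0 ({1..p} \<union> {p+1..q})" using pq by auto
  have act: "active_set p g x \<subseteq> {1..p}" by (auto simp: active_set_def)
  have "(\<Sum>i\<in>{1..p}. m i *\<^sub>R \<zeta> i) = (\<Sum>i\<in>active_set p g x. m i *\<^sub>R \<zeta> i)"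
    using feas mult(2) by (intro sum.mono_neutral_right[OF _ act])
      (auto simp: active_set_def feasible_P_def order.order_iff_strict)
  with sum have "\<zeta> 0 + (\<Sum>i\<in>active_set p g x. m i *\<^sub>R \<zeta> i) + (\<Sum>j\<in>{p+1..q}. m j *\<^sub>R \<zeta> j) = 0"
    unfolding split by (simp add: sum.union_disjoint mult(1) add.assoc)
  then show ?thesis
    unfolding clarke_stationary_def using feas grads mult(2) act by blast
qed

section \<open>Smoothing families\<close>

lemma smoothing_family_tendsto:
  assumes "smoothing_family F Fs dFs" "z \<longlonglongrightarrow> x" "filterlim \<rho> at_top sequentially"
  shows "(\<lambda>k. Fs (\<rho> k) (z k)) \<longlonglongrightarrow> F x"
proof -
  have "((\<lambda>(z, \<rho>). Fs \<rho> z) \<longlongrightarrow> F x) (nhds x \<times>\<^sub>F at_top)"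
    using assms(1) unfolding smoothing_family_def by auto
  from filterlim_compose[OF this filterlim_Pair[OF assms(2,3)]] show ?thesis by simp
qed

lemma smoothing_linearization_tendsto:
  assumes "smoothing_family F Fs dFs" "z \<longlonglongrightarrow> x" "filterlim \<rho> at_top sequentially"
    and "(\<lambda>k. dFs (\<rho> k) (z k)) \<longlonglongrightarrow> v" "d \<longlonglongrightarrow> 0"
  shows "(\<lambda>k. Fs (\<rho> k) (z k) + dFs (\<rho> k) (z k) \<bullet> d k) \<longlonglongrightarrow> F x"
  using tendsto_add[OF smoothing_family_tendsto[OF assms(1-3)] tendsto_inner[OF assms(4,5)]] by simp

lemma smoothing_family_uniform_on_compact:
  fixes F :: "'a::euclidean_space \<Rightarrow> real"
  assumes sm: "smoothing_family F Fs dFs" and cF: "continuous_on UNIV F"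
    and K: "compact K" and e: "0 < e"
  shows "\<exists>N. \<forall>z\<in>K. \<forall>\<rho>\<ge>N. \<bar>Fs \<rho> z - F z\<bar> < e"
proof (rule ccontr)
  assume "\<not> ?thesis"
  then have "\<forall>n::nat. \<exists>z\<in>K. \<exists>\<rho>\<ge>real n. e \<le> \<bar>Fs \<rho> z - F z\<bar>" by (auto simp: not_less)
  then obtain z \<rho> where z: "\<And>n. z n \<in> K" and \<rho>: "\<And>n. real n \<le> \<rho> n"
    and far: "\<And>n. e \<le> \<bar>Fs (\<rho> n) (z n) - F (z n)\<bar>" by metis
  obtain y s where "y \<in> K" and s: "strict_mono s" and zs: "(z \<circ> s) \<longlonglongrightarrow> y"
    using compact_imp_seq_compact[OF K, unfolded seq_compact_def] z by metis
  have "real k \<le> (\<rho> \<circ> s) k" for k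
    using seq_suble[OF s, of k] \<rho>[of "s k"] by simp
  then have "filterlim (\<rho> \<circ> s) at_top sequentially"
    by (intro filterlim_at_top_mono[OF filterlim_real_sequentially]) auto
  from smoothing_family_tendsto[OF sm zs this]
  have "(\<lambda>k. \<bar>Fs (\<rho> (s k)) (z (s k)) - F (z (s k))\<bar>) \<longlonglongrightarrow> \<bar>F y - F y\<bar>"
    using continuous_on_tendsto_compose[OF cF zs] by (intro tendsto_intros) (auto simp: o_def)
  then have "eventually (\<lambda>k. \<bar>Fs (\<rho> (s k)) (z (s k)) - F (z (s k))\<bar> < e) sequentially"
    using e by (auto dest: order_tendstoD)
  then show False using far by (auto simp: not_less[symmetric] dest: eventually_happens)
qed

text \<open>Minimise \<open>G w + C |w - x|\<^sup>2\<close> over the closed ball: the sphere condition keeps the minimiser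
  inside, where the gradient of this function vanishes.\<close>

lemma small_gradient_in_ball:
  fixes G :: "'a::euclidean_space \<Rightarrow> real"
  assumes der: "\<And>y. (G has_derivative (\<lambda>v. dG y \<bullet> v)) (at y)" and r: "0 < r" and C: "0 \<le> C"
    and sphere: "\<And>b. norm (b - x) = r \<Longrightarrow> G x < G b + C * r\<^sup>2"
  shows "\<exists>w. norm (w - x) < r \<and> norm (dG w) \<le> 2 * C * r"
proof -
  define H where "H w = G w + C * ((w - x) \<bullet> (w - x))" for w
  have dH: "(H has_derivative (\<lambda>h. dG w \<bullet> h + C * (h \<bullet> (w - x) + (w - x) \<bullet> h))) (at w)" for w
    unfolding H_def by (auto intro!: derivative_eq_intros der)
  have cH: "continuous_on (cball x r) H"
    by (rule has_derivative_continuous_on) (use dH has_derivative_at_withinI in blast)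
  obtain w where w: "w \<in> cball x r" and wmin: "\<And>y. y \<in> cball x r \<Longrightarrow> H w \<le> H y"
    using continuous_attains_inf[OF compact_cball _ cH] r by fastforce
  have inside: "norm (w - x) < r"
  proof (rule ccontr)
    assume "\<not> norm (w - x) < r"
    then have "norm (w - x) = r" using w by (simp add: dist_norm norm_minus_commute)
    then have "H x < H w"
      using sphere[of w] by (simp add: H_def power2_norm_eq_inner[symmetric])
    with wmin[of x] r show False by simp
  qed
  then have "eventually (\<lambda>y. H w \<le> H y) (at w)"
    using eventually_at_in_open'[of "ball x r" w] wmin
    by (auto simp: dist_norm norm_minus_commute elim!: eventually_mono)
  from has_derivative_local_min[OF dH this]
  have crit: "dG w \<bullet> h + C * (h \<bullet> (w - x) + (w - x) \<bullet> h) = 0" for h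
    by (simp add: fun_eq_iff)
  define h where "h = dG w + (2 * C) *\<^sub>R (w - x)"
  have "h \<bullet> h = dG w \<bullet> h + C * (h \<bullet> (w - x) + (w - x) \<bullet> h)"
    unfolding h_def by (simp add: inner_add_left inner_add_right inner_commute algebra_simps)
  with crit[of h] have "h = 0" by simp
  then have "dG w = - (2 * C) *\<^sub>R (w - x)" unfolding h_def by (simp add: eq_neg_iff_add_eq_0)
  then have "norm (dG w) = 2 * C * norm (w - x)" using C by simp
  also have "\<dots> \<le> 2 * C * r" using inside C by (simp add: mult_left_mono)
  finally show ?thesis using inside by blast
qed

lemma norm_attains_level_in_ball:
  fixes G :: "'a::real_normed_vector \<Rightarrow> 'b::real_normed_vector"
  assumes "continuous_on (ball x r) G" "w \<in> ball x r" "z \<in> ball x r"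
    and "norm (G w) \<le> R" "R \<le> norm (G z)"
  shows "\<exists>y\<in>ball x r. norm (G y) = R"
proof -
  have "connected ((\<lambda>y. norm (G y)) ` ball x r)"
    using assms(1) by (intro connected_continuous_image continuous_on_norm connected_ball)
  from connected_contains_Icc[OF this] assms(2-5) show ?thesis by fastforce
qed

lemma smoothing_small_gradient_nearby:
  fixes F :: "'a::euclidean_space \<Rightarrow> real"
  assumes sm: "smoothing_family F Fs dFs" and cF: "continuous_on UNIV F"
    and L: "L-lipschitz_on (ball x e) F" and r: "0 < r" "r < e"
  shows "\<exists>N. \<forall>\<rho>\<ge>N. 0 < \<rho> \<longrightarrow> (\<exists>w. norm (w - x) < r \<and> norm (dFs \<rho> w) \<le> 2 * L + 6 * r)"
proof -
  obtain N where N: "\<And>b \<rho>. b \<in> cball x r \<Longrightarrow> N \<le> \<rho> \<Longrightarrow> \<bar>Fs \<rho> b - F b\<bar> < r\<^sup>2"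
    using smoothing_family_uniform_on_compact[OF sm cF compact_cball[of x r] zero_less_power[OF r(1)]] by blast
  have "\<exists>w. norm (w - x) < r \<and> norm (dFs \<rho> w) \<le> 2 * L + 6 * r" if \<rho>: "N \<le> \<rho>" "0 < \<rho>" for \<rho>
  proof -
    define C where "C = L / r + 3"
    have C: "0 \<le> C" "C * r\<^sup>2 = L * r + 3 * r\<^sup>2" "2 * C * r = 2 * L + 6 * r"
      using r lipschitz_on_nonneg[OF L] by (auto simp: C_def power2_eq_square field_simps)
    have "Fs \<rho> x < Fs \<rho> b + C * r\<^sup>2" if b: "norm (b - x) = r" for b
    proof -
      have "b \<in> cball x r" "x \<in> cball x r" "b \<in> ball x e" "x \<in> ball x e"
        using b r by (auto simp: dist_norm norm_minus_commute)
      then have "\<bar>Fs \<rho> x - F x\<bar> < r\<^sup>2" "\<bar>Fs \<rho> b - F b\<bar> < r\<^sup>2" "\<bar>F x - F b\<bar> \<le> L * r"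
        using N \<rho> lipschitz_onD[OF L, of x b] b by (auto simp: dist_real_def dist_norm norm_minus_commute)
      then show ?thesis using C(2) by (simp add: abs_less_iff abs_le_iff)
    qed
    moreover have "(Fs \<rho> has_derivative (\<lambda>v. dFs \<rho> y \<bullet> v)) (at y)" for y
      using sm \<rho> unfolding smoothing_family_def by blast
    ultimately show ?thesis
      using small_gradient_in_ball[of "Fs \<rho>" "dFs \<rho>" r C x] r C by auto
  qed
  then show ?thesis by blast
qed

lemma grad_limitsI:
  assumes "z \<longlonglongrightarrow> x" "\<And>k. 0 < \<rho> k" "filterlim \<rho> at_top sequentially"
    and "(\<lambda>k. dFs (\<rho> k) (z k)) \<longlonglongrightarrow> v"
  shows "v \<in> grad_limits dFs x"
  using assms unfolding grad_limits_def by blast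

lemma smoothing_gradient_level_point:
  fixes F :: "'a::euclidean_space \<Rightarrow> real"
  assumes sm: "smoothing_family F Fs dFs" and cF: "continuous_on UNIV F"
    and L: "L-lipschitz_on (ball x e) F" and e: "0 < e" and R: "2 * L + 6 \<le> R"
    and big: "frequently (\<lambda>k. R < norm (dFs (\<rho> k) (z k))) sequentially"
    and zx: "z \<longlonglongrightarrow> x" and \<rho>: "filterlim \<rho> at_top sequentially" and pos: "\<And>k. 0 < \<rho> k"
    and \<delta>: "0 < \<delta>" "\<delta> \<le> 1"
  shows "\<exists>y s. dist y x < \<delta> \<and> N \<le> s \<and> 0 < s \<and> norm (dFs s y) = R"
proof -
  define r where "r = min \<delta> (e / 2)"
  have r: "0 < r" "r \<le> \<delta>" "r < e" using e \<delta> by (auto simp: r_def)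
  obtain N' where N': "\<And>s. N' \<le> s \<Longrightarrow> 0 < s \<Longrightarrow> \<exists>w. norm (w - x) < r \<and> norm (dFs s w) \<le> 2 * L + 6 * r"
    using smoothing_small_gradient_nearby[OF sm cF L r(1,3)] by blast
  have "eventually (\<lambda>k. max N' N \<le> \<rho> k \<and> dist (z k) x < r) sequentially"
    using \<rho> tendstoD[OF zx r(1)] unfolding filterlim_at_top by (intro eventually_conj) blast+
  from frequently_eventually_frequently[OF big this] obtain k where
    k: "R < norm (dFs (\<rho> k) (z k))" "max N' N \<le> \<rho> k" "dist (z k) x < r"
    by (auto dest: frequently_ex)
  then obtain w where w: "norm (w - x) < r" "norm (dFs (\<rho> k) w) \<le> 2 * L + 6 * r"
    using N'[of "\<rho> k"] pos by auto
  have small: "norm (dFs (\<rho> k) w) \<le> R" using w(2) r(2) \<delta>(2) R by linarith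
  have inside: "w \<in> ball x r" "z k \<in> ball x r"
    using w(1) k(3) by (auto simp: dist_norm norm_minus_commute)
  have "continuous_on UNIV (dFs (\<rho> k))" using sm pos unfolding smoothing_family_def by blast
  then have "continuous_on (ball x r) (dFs (\<rho> k))" by (rule continuous_on_subset) simp
  from norm_attains_level_in_ball[OF this inside small less_imp_le[OF k(1)]]
  obtain y where "y \<in> ball x r" "norm (dFs (\<rho> k) y) = R" by blast
  then show ?thesis
    using r(2) k(2) pos by (intro exI[of _ y] exI[of _ "\<rho> k"]) (auto simp: dist_commute)
qed

text \<open>If the gradients were unbounded, then arbitrarily close to \<open>x\<close> and for arbitrarily large
  smoothing parameters they would take the norm \<open>R\<close> exactly; a limit of such gradients lies in the
  Clarke gradient but is longer than the local Lipschitz constant allows.\<close>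

lemma smoothing_gradients_bounded:
  fixes F :: "'a::euclidean_space \<Rightarrow> real"
  assumes sm: "smoothing_family F Fs dFs" and gc: "grad_consistent F dFs" and lip: "loc_lipschitz F"
    and zx: "z \<longlonglongrightarrow> x" and \<rho>: "filterlim \<rho> at_top sequentially" and pos: "\<And>k. 0 < \<rho> k"
  shows "bounded (range (\<lambda>k. dFs (\<rho> k) (z k)))"
proof (rule ccontr)
  obtain e L where e: "0 < e" and L: "0 \<le> L" "L-lipschitz_on (ball x e) F"
    using lip by (rule loc_lipschitz_imp_lipschitz_on_ball)
  define R where "R = 2 * L + 7"
  assume "\<not> ?thesis"
  moreover have "bounded (range (\<lambda>k. dFs (\<rho> k) (z k)))"
    if "eventually (\<lambda>k. norm (dFs (\<rho> k) (z k)) \<le> R) sequentially"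
    using that Bseq_eventually_mono[of "\<lambda>k. dFs (\<rho> k) (z k)" "\<lambda>_. R"] L(1)
    by (simp add: R_def Bseq_eq_bounded[symmetric])
  ultimately have "\<not> eventually (\<lambda>k. norm (dFs (\<rho> k) (z k)) \<le> R) sequentially"
    by blast
  then have "frequently (\<lambda>k. R < norm (dFs (\<rho> k) (z k))) sequentially"
    by (simp add: not_eventually not_le)
  note level_point = smoothing_gradient_level_point[OF sm loc_lipschitz_continuous[OF lip] L(2) e _ this zx \<rho> pos]
  have "\<exists>y s. dist y x < 1 / (real n + 1) \<and> real n \<le> s \<and> 0 < s \<and> norm (dFs s y) = R" for n
    by (rule level_point) (auto simp: R_def divide_le_eq)
  then obtain y s where y: "\<And>n. dist (y n) x < 1 / (real n + 1)"
    and s: "\<And>n. real n \<le> s n" "\<And>n. 0 < s n" and level: "\<And>n. norm (dFs (s n) (y n)) = R"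
    by metis
  have "(\<lambda>n. 1 / (real n + 1)) \<longlonglongrightarrow> (0::real)"
    using LIMSEQ_inverse_real_of_nat by (simp add: inverse_eq_divide add.commute)
  moreover have "norm (y n - x) \<le> 1 / (real n + 1)" for n
    using less_imp_le[OF y[of n]] by (simp add: dist_norm)
  ultimately have "(\<lambda>n. y n - x) \<longlonglongrightarrow> 0"
    using Lim_null_comparison[of "\<lambda>n. y n - x" "\<lambda>n. 1 / (real n + 1)"] by simp
  then have yx: "y \<longlonglongrightarrow> x" by (simp add: Lim_null[symmetric])
  have s_top: "filterlim s at_top sequentially"
    using s(1) by (intro filterlim_at_top_mono[OF filterlim_real_sequentially]) auto
  have "bounded (range (\<lambda>n. dFs (s n) (y n)))"
    using level by (auto simp: bounded_iff)
  then obtain v t where t: "strict_mono t" and vt: "((\<lambda>n. dFs (s n) (y n)) \<circ> t) \<longlonglongrightarrow> v"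
    using bounded_imp_convergent_subsequence by blast
  have "v \<in> grad_limits dFs x"
    using LIMSEQ_subseq_LIMSEQ[OF yx t] filterlim_compose[OF s_top filterlim_subseq[OF t]] s(2) vt
    by (intro grad_limitsI[of "y \<circ> t" x "s \<circ> t"]) (auto simp: o_def)
  then have "v \<in> clarke_grad F x" using gc unfolding grad_consistent_def by blast
  then have "norm v \<le> L" by (rule norm_le_of_clarke_grad[OF e L(2)])
  moreover have "(\<lambda>n. R) \<longlonglongrightarrow> norm v"
    using tendsto_norm[OF vt] level by (simp add: o_def)
  then have "norm v = R" by (simp add: LIMSEQ_const_iff)
  ultimately show False using L(1) by (simp add: R_def)
qed

lemma uniform_linearization_error:
  fixes F :: "'a::euclidean_space \<Rightarrow> real"
  assumes der: "\<And>y. (F has_derivative (\<lambda>v. dF y \<bullet> v)) (at y)" and cd: "continuous_on UNIV dF"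
    and bX: "\<And>n. norm (X n) \<le> BX" and bD: "\<And>n. norm (D n) \<le> BD"
    and T: "\<And>n. 0 < T n" and T0: "T \<longlonglongrightarrow> 0" and \<epsilon>: "0 < \<epsilon>"
  shows "eventually (\<lambda>n. \<bar>F (X n + T n *\<^sub>R D n) - F (X n) - T n * (dF (X n) \<bullet> D n)\<bar> \<le> T n * \<epsilon>)
           sequentially"
proof -
  define K where "K = cball (0::'a) (BX + BD)"
  have BD: "0 \<le> BD" using bD[of 0] norm_ge_zero order_trans by blast
  have "uniformly_continuous_on K dF"
    unfolding K_def by (rule compact_uniformly_continuous) (auto intro: continuous_on_subset[OF cd])
  then obtain \<delta> where \<delta>: "0 < \<delta>"
    and uc: "\<And>a b. a \<in> K \<Longrightarrow> b \<in> K \<Longrightarrow> dist b a < \<delta> \<Longrightarrow> dist (dF b) (dF a) < \<epsilon> / (BD + 1)"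
    unfolding uniformly_continuous_on_def using \<epsilon> BD by (metis add_nonneg_pos divide_pos_pos zero_less_one)
  have "eventually (\<lambda>n. T n < min 1 (\<delta> / (BD + 1))) sequentially"
    using order_tendstoD(2)[OF T0, of "min 1 (\<delta> / (BD + 1))"] \<delta> BD by simp
  then show ?thesis
  proof eventually_elim
    case (elim n)
    define x d t where "x = X n" and "d = D n" and "t = T n"
    have t: "0 < t" "t < 1" "t * (BD + 1) < \<delta>"
      using T[of n] elim BD by (auto simp: t_def pos_less_divide_eq)
    have nd: "norm d \<le> BD" and xK: "x \<in> K" using bX[of n] bD[of n] BD by (auto simp: K_def x_def d_def)
    have "((\<lambda>s. F (x + s *\<^sub>R d)) has_real_derivative (dF (x + s *\<^sub>R d) \<bullet> d)) (at s)" for s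
      by (rule has_real_derivative_along_line[OF der])
    from MVT2[OF t(1) this] obtain z where z: "0 < z" "z < t"
      and mvt: "F (x + t *\<^sub>R d) - F (x + 0 *\<^sub>R d) = (t - 0) * (dF (x + z *\<^sub>R d) \<bullet> d)"
      by blast
    have "norm (x + z *\<^sub>R d) \<le> BX + BD"
      using norm_triangle_ineq[of x "z *\<^sub>R d"] bX[of n] mult_mono[OF _ nd, of z 1] z t
      by (simp add: x_def)
    then have zK: "x + z *\<^sub>R d \<in> K" by (simp add: K_def)
    have "dist (x + z *\<^sub>R d) x \<le> t * (BD + 1)"
      using z nd by (simp add: dist_norm mult_mono)
    then have "norm (dF (x + z *\<^sub>R d) - dF x) \<le> \<epsilon> / (BD + 1)"
      using uc[OF xK zK] t by (simp add: dist_norm)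
    then have "norm (dF (x + z *\<^sub>R d) - dF x) * norm d \<le> \<epsilon> / (BD + 1) * BD"
      using nd \<epsilon> BD by (intro mult_mono) auto
    with Cauchy_Schwarz_ineq2[of "dF (x + z *\<^sub>R d) - dF x" d]
    have "\<bar>(dF (x + z *\<^sub>R d) - dF x) \<bullet> d\<bar> \<le> \<epsilon> / (BD + 1) * BD" by linarith
    also have "\<dots> \<le> \<epsilon>" using \<epsilon> BD by (simp add: field_simps)
    finally have "t * \<bar>(dF (x + z *\<^sub>R d) - dF x) \<bullet> d\<bar> \<le> t * \<epsilon>"
      using t by (simp add: mult_left_mono)
    moreover have "F (x + t *\<^sub>R d) - F x - t * (dF x \<bullet> d) = t * ((dF (x + z *\<^sub>R d) - dF x) \<bullet> d)"
      using mvt by (simp add: inner_diff_left algebra_simps)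
    ultimately show ?case
      using t by (simp add: x_def d_def t_def abs_mult)
  qed
qed

section \<open>Sequences and quadratic forms\<close>

lemma filterlim_at_top_of_frequent_scaling:
  fixes u :: "nat \<Rightarrow> real"
  assumes upd: "\<And>k. u (Suc k) = (if P k then c * u k else u k)" and c: "1 < c" and u0: "0 < u 0"
    and inf: "infinite {k. P k}"
  shows "filterlim u at_top sequentially"
proof -
  have pos: "0 < u k" for k by (induction k) (use upd c u0 in auto)
  then have inc: "incseq u" using upd c by (intro incseq_SucI) simp
  have grow: "\<exists>k. u 0 * c ^ n \<le> u k" for n
  proof (induction n)
    case (Suc n)
    then obtain k where k: "u 0 * c ^ n \<le> u k" by blast
    obtain k' where k': "k \<le> k'" "P k'" using inf unfolding infinite_nat_iff_unbounded_le by blast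
    have "u 0 * c ^ Suc n \<le> c * u k'"
      using k incseqD[OF inc k'(1)] c by (simp add: mult_left_mono)
    then show ?case using upd[of k'] k'(2) by (intro exI[of _ "Suc k'"]) simp
  qed auto
  show ?thesis
  proof (subst filterlim_at_top, intro allI)
    fix Z :: real
    obtain n where "Z / u 0 < c ^ n" using real_arch_pow[OF c] by blast
    then have "Z \<le> u 0 * c ^ n" using u0 by (simp add: field_simps)
    moreover obtain k where "u 0 * c ^ n \<le> u k" using grow by blast
    ultimately have "Z \<le> u m" if "k \<le> m" for m
      using incseqD[OF inc that] by linarith
    then show "eventually (\<lambda>m. Z \<le> u m) sequentially"
      unfolding eventually_sequentially by blast
  qed
qed

lemma summable_of_bounded_decrease:
  fixes u a :: "nat \<Rightarrow> real"
  assumes dec: "\<And>n. u (Suc n) + c * a n \<le> u n" and a: "\<And>n. 0 \<le> a n"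
    and B: "\<And>n. B \<le> u n" and c: "0 < c"
  shows "summable a"
proof (rule summableI_nonneg_bounded)
  have "u n + c * (\<Sum>i<n. a i) \<le> u 0" for n
  proof (induction n)
    case (Suc n)
    then show ?case unfolding sum.lessThan_Suc distrib_left using dec[of n] by linarith
  qed simp
  then have "c * (\<Sum>i<n. a i) \<le> u 0 - B" for n
    using B[of n] by (smt (verit))
  then show "(\<Sum>i<n. a i) \<le> (u 0 - B) / c" for n
    using c by (simp add: pos_le_divide_eq mult.commute)
qed (rule a)

lemma finite_family_convergent_subsequence:
  fixes X :: "'i \<Rightarrow> nat \<Rightarrow> 'a::heine_borel"
  assumes "finite I" "\<forall>i\<in>I. bounded (range (X i))"
  shows "\<exists>s. strict_mono s \<and> (\<forall>i\<in>I. \<exists>l. (X i \<circ> s) \<longlonglongrightarrow> l)"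
  using assms
proof (induction I rule: finite_induct)
  case empty
  show ?case by (auto intro: exI[of _ id] simp: strict_mono_def)
next
  case (insert i I)
  then obtain s where s: "strict_mono s" "\<forall>j\<in>I. \<exists>l. (X j \<circ> s) \<longlonglongrightarrow> l" by blast
  have "range (X i \<circ> s) \<subseteq> range (X i)" by auto
  then have "bounded (range (X i \<circ> s))"
    using insert.prems bounded_subset by blast
  from bounded_imp_convergent_subsequence[OF this]
  obtain l s' where s': "strict_mono s'" "((X i \<circ> s) \<circ> s') \<longlonglongrightarrow> l" by blast
  have "\<forall>j\<in>insert i I. \<exists>l. (X j \<circ> (s \<circ> s')) \<longlonglongrightarrow> l"
  proof
    fix j assume "j \<in> insert i I"
    then show "\<exists>l. (X j \<circ> (s \<circ> s')) \<longlonglongrightarrow> l"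
    proof
      assume "j = i"
      then show ?thesis using s'(2) by (auto simp: o_assoc)
    next
      assume "j \<in> I"
      then obtain l where "(X j \<circ> s) \<longlonglongrightarrow> l" using s(2) by auto
      from LIMSEQ_subseq_LIMSEQ[OF this s'(1)] show ?thesis by (auto simp: o_assoc)
    qed
  qed
  with strict_mono_o[OF s(1) s'(1)] show ?case by blast
qed

lemma le_of_quadratic_le_linear:
  fixes t :: real
  assumes "0 < m" "0 \<le> G" "0 \<le> t" "m * t\<^sup>2 \<le> C + G * t"
  shows "t \<le> max 1 ((\<bar>C\<bar> + G) / m)"
proof (cases "t \<le> 1")
  case False
  then have "m * t * t \<le> (\<bar>C\<bar> + G) * t"
    using assms(4) mult_right_mono[of 1 t "\<bar>C\<bar>"] by (simp add: power2_eq_square algebra_simps)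
  then have "m * t \<le> \<bar>C\<bar> + G" using False by simp
  then have "t \<le> (\<bar>C\<bar> + G) / m" using assms(1) by (simp add: pos_le_divide_eq mult.commute)
  then show ?thesis by simp
qed simp

lemma norm_mult_vec_le_of_quadratic_bound:
  fixes W :: "real ^ 'n ^ 'n"
  assumes sym: "transpose W = W" and psd: "\<And>v. 0 \<le> v \<bullet> (W *v v)"
    and ub: "\<And>v. v \<bullet> (W *v v) \<le> M * (norm v)\<^sup>2"
  shows "norm (W *v v) \<le> M * norm v"
proof -
  have symm: "a \<bullet> (W *v b) = b \<bullet> (W *v a)" for a b
    by (metis dot_lmul_matrix inner_commute sym transpose_transpose vector_transpose_matrix)
  have "0 < (norm (1 :: real ^ 'n))\<^sup>2" by simp
  then have M: "0 \<le> M" using order_trans[OF psd ub, of 1] by (auto simp: zero_le_mult_iff)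
  have "2 * (a \<bullet> (W *v b)) \<le> M * ((norm a)\<^sup>2 + (norm b)\<^sup>2)" for a b
  proof -
    have "4 * (a \<bullet> (W *v b)) = (a + b) \<bullet> (W *v (a + b)) - (a - b) \<bullet> (W *v (a - b))"
      using symm[of a b] by (simp add: matrix_vector_right_distrib matrix_vector_mult_diff_distrib
          inner_add_left inner_add_right inner_diff_left inner_diff_right)
    also have "\<dots> \<le> M * (norm (a + b))\<^sup>2" using psd[of "a - b"] ub[of "a + b"] by linarith
    also have "\<dots> \<le> M * (2 * ((norm a)\<^sup>2 + (norm b)\<^sup>2))"
    proof -
      have "(norm (a + b))\<^sup>2 + (norm (a - b))\<^sup>2 = 2 * ((norm a)\<^sup>2 + (norm b)\<^sup>2)"
        by (simp add: power2_norm_eq_inner inner_add_left inner_add_right inner_diff_left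
            inner_diff_right inner_commute)
      then show ?thesis using M zero_le_power2[of "norm (a - b)"] by (intro mult_left_mono) linarith+
    qed
    finally show ?thesis by (simp add: algebra_simps)
  qed
  note key = this
  show ?thesis
  proof (cases "W *v v = 0")
    case False
    define w where "w = W *v v"
    define c where "c = norm v / norm w"
    have "v \<noteq> 0" using False by auto
    then have c: "0 < c" "c * norm w = norm v" using False by (auto simp: c_def w_def)
    have "2 * (c * (norm w)\<^sup>2) \<le> M * ((c * norm w)\<^sup>2 + (norm v)\<^sup>2)"
      using key[of "c *\<^sub>R w" v] c(1) by (simp add: w_def power2_norm_eq_inner power_mult_distrib)
    also have "(c * norm w)\<^sup>2 = (norm v)\<^sup>2" using c(2) by simp
    also have "c * (norm w)\<^sup>2 = norm v * norm w" by (metis c(2) mult.assoc power2_eq_square)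
    finally have "norm v * norm w \<le> M * (norm v * norm v)" by (simp add: power2_eq_square)
    then show ?thesis
      using \<open>v \<noteq> 0\<close> by (simp add: w_def mult.assoc[symmetric] mult.commute[of M] mult_le_cancel_right)
  qed (use M in simp)
qed

section \<open>Runs of the algorithm\<close>

locale smoothing_sqp =
  fixes f :: "real ^ 'n \<Rightarrow> real"
    and g h :: "nat \<Rightarrow> real ^ 'n \<Rightarrow> real"
    and p q :: nat
    and fs :: "real \<Rightarrow> real ^ 'n \<Rightarrow> real" and dfs :: "real \<Rightarrow> real ^ 'n \<Rightarrow> real ^ 'n"
    and gs hs :: "real \<Rightarrow> nat \<Rightarrow> real ^ 'n \<Rightarrow> real"
    and dgs dhs :: "real \<Rightarrow> nat \<Rightarrow> real ^ 'n \<Rightarrow> real ^ 'n"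
    and \<beta> \<sigma>1 \<sigma>2 \<sigma> \<sigma>' \<eta> :: real
    and x d :: "nat \<Rightarrow> real ^ 'n"
    and \<rho> \<xi> r \<alpha> :: "nat \<Rightarrow> real"
    and W :: "nat \<Rightarrow> real ^ 'n ^ 'n"
    and lg lp lm :: "nat \<Rightarrow> nat \<Rightarrow> real" and lxi :: "nat \<Rightarrow> real"
  assumes pq: "p \<le> q"
    and lip_f: "loc_lipschitz f"
    and lip_g: "\<forall>i\<in>{1..p}. loc_lipschitz (g i)"
    and lip_h: "\<forall>j\<in>{p+1..q}. loc_lipschitz (h j)"
    and sm_f: "smoothing_family f fs dfs \<and> grad_consistent f dfs"
    and sm_g: "\<forall>i\<in>{1..p}. smoothing_family (g i) (\<lambda>s. gs s i) (\<lambda>s. dgs s i)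
                            \<and> grad_consistent (g i) (\<lambda>s. dgs s i)"
    and sm_h: "\<forall>j\<in>{p+1..q}. smoothing_family (h j) (\<lambda>s. hs s j) (\<lambda>s. dhs s j)
                            \<and> grad_consistent (h j) (\<lambda>s. dhs s j)"
    and params: "0 < \<beta> \<and> \<beta> < 1 \<and> 0 < \<sigma>1 \<and> \<sigma>1 \<le> \<sigma>2 \<and> \<sigma>2 < 1 \<and> 1 < \<sigma> \<and> 1 < \<sigma>' \<and> 1 < \<eta>"
    and init: "\<rho> 0 > 0 \<and> r 0 > 0"
    and W_spd: "\<forall>k. transpose (W k) = W k \<and> (\<forall>v. v \<noteq> 0 \<longrightarrow> v \<bullet> (W k *v v) > 0)"
    and qp_sol: "\<forall>k. qp_feasible p q gs dgs hs dhs (\<rho> k) (x k) (d k) (\<xi> k) \<and>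
                   (\<forall>d' \<xi>'. qp_feasible p q gs dgs hs dhs (\<rho> k) (x k) d' \<xi>' \<longrightarrow>
                      qp_obj dfs (\<rho> k) (x k) (W k) (r k) (d k) (\<xi> k) \<le> qp_obj dfs (\<rho> k) (x k) (W k) (r k) d' \<xi>')"
    and kkt_sign: "\<forall>k. (\<forall>i\<in>{1..p}. lg k i \<ge> 0) \<and> (\<forall>j\<in>{p+1..q}. lp k j \<ge> 0 \<and> lm k j \<ge> 0) \<and> lxi k \<ge> 0"
    and kkt_d: "\<forall>k. dfs (\<rho> k) (x k) + W k *v d k + (\<Sum>i\<in>{1..p}. lg k i *\<^sub>R dgs (\<rho> k) i (x k))
                    + (\<Sum>j\<in>{p+1..q}. (lp k j - lm k j) *\<^sub>R dhs (\<rho> k) j (x k)) = 0"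
    and kkt_xi: "\<forall>k. r k = (\<Sum>i\<in>{1..p}. lg k i) + (\<Sum>j\<in>{p+1..q}. lp k j + lm k j) + lxi k"
    and kkt_compl: "\<forall>k. (\<forall>i\<in>{1..p}. lg k i * (gs (\<rho> k) i (x k) + dgs (\<rho> k) i (x k) \<bullet> d k - \<xi> k) = 0) \<and>
                       (\<forall>j\<in>{p+1..q}. lp k j * (hs (\<rho> k) j (x k) + dhs (\<rho> k) j (x k) \<bullet> d k - \<xi> k) = 0 \<and>
                                      lm k j * (- hs (\<rho> k) j (x k) - dhs (\<rho> k) j (x k) \<bullet> d k - \<xi> k) = 0) \<and>
                       lxi k * \<xi> k = 0"
    and r_upd: "\<forall>k. r (Suc k) = (if \<xi> k = 0 then r k else \<sigma>' * r k)"
    and armijo: "\<forall>k. \<exists>l::nat. \<alpha> k = \<beta> ^ l \<and>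
                   theta_s p q fs gs hs (\<rho> k) (r k) (x k + \<beta> ^ l *\<^sub>R d k) - theta_s p q fs gs hs (\<rho> k) (r k) (x k)
                      \<le> - \<sigma>1 * \<beta> ^ l * (d k \<bullet> (W k *v d k)) \<and>
                   (\<forall>l'<l. \<not> (theta_s p q fs gs hs (\<rho> k) (r k) (x k + \<beta> ^ l' *\<^sub>R d k) - theta_s p q fs gs hs (\<rho> k) (r k) (x k)
                      \<le> - \<sigma>1 * \<beta> ^ l' * (d k \<bullet> (W k *v d k))))"
    and x_upd: "\<forall>k. x (Suc k) = x k + \<alpha> k *\<^sub>R d k"
    and rho_upd: "\<forall>k. \<rho> (Suc k) = (if norm (d k) \<le> \<eta> / \<rho> k then \<sigma> * \<rho> k else \<rho> k)"
begin

abbreviation merit :: "nat \<Rightarrow> real ^ 'n \<Rightarrow> real" where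
  "merit k \<equiv> theta_s p q fs gs hs (\<rho> k) (r k)"

lemma rho_pos: "0 < \<rho> k"
  by (induction k) (use init params rho_upd in \<open>auto simp: mult_pos_pos\<close>)

lemma step_pos: "0 < \<alpha> k"
  using armijo params by (metis zero_less_power)

lemma qp_kkt_iterate:
  "qp_kkt p q gs dgs hs dhs dfs (\<rho> k) (x k) (W k *v d k) (d k) (\<xi> k) (r k) (lg k) (lp k) (lm k) (lxi k)"
  unfolding qp_kkt_def using kkt_sign kkt_d kkt_xi kkt_compl by blast

lemma qp_feasible_iterate: "qp_feasible p q gs dgs hs dhs (\<rho> k) (x k) (d k) (\<xi> k)"
  using qp_sol by blast

lemma r_nonneg: "0 \<le> r k"
  by (rule qp_kkt_penalty_nonneg[OF qp_kkt_iterate])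

lemma smoothing_derivatives:
  assumes "0 < s"
  shows "(fs s has_derivative (\<lambda>v. dfs s y \<bullet> v)) (at y)" "continuous_on UNIV (dfs s)"
    and "i \<in> {1..p} \<Longrightarrow> (gs s i has_derivative (\<lambda>v. dgs s i y \<bullet> v)) (at y)"
    and "i \<in> {1..p} \<Longrightarrow> continuous_on UNIV (dgs s i)"
    and "j \<in> {p+1..q} \<Longrightarrow> (hs s j has_derivative (\<lambda>v. dhs s j y \<bullet> v)) (at y)"
    and "j \<in> {p+1..q} \<Longrightarrow> continuous_on UNIV (dhs s j)"
  using sm_f sm_g sm_h assms unfolding smoothing_family_def by auto

lemma merit_dir_deriv_le:
  "\<exists>D. ((\<lambda>t. (merit k (x k + t *\<^sub>R d k) - merit k (x k)) / t) \<longlongrightarrow> D) (at_right 0)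
       \<and> D \<le> - (d k \<bullet> (W k *v d k))"
proof -
  have dg: "\<forall>i\<in>{1..p}. (gs (\<rho> k) i has_derivative (\<lambda>v. dgs (\<rho> k) i (x k) \<bullet> v)) (at (x k))"
    and dh: "\<forall>j\<in>{p+1..q}. (hs (\<rho> k) j has_derivative (\<lambda>v. dhs (\<rho> k) j (x k) \<bullet> v)) (at (x k))"
    using smoothing_derivatives(3,5)[OF rho_pos] by blast+
  obtain D where "((\<lambda>t. merit k (x k + t *\<^sub>R d k)) has_real_derivative D) (at_right 0)"
    and "D \<le> - (d k \<bullet> (W k *v d k))"
    using theta_s_right_deriv_le[where fs=fs and dfs=dfs and gs=gs and hs=hs and \<rho>="\<rho> k" and x="x k",
        OF pq smoothing_derivatives(1)[OF rho_pos] dg dh qp_feasible_iterate qp_kkt_iterate]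
    by blast
  then show ?thesis unfolding has_field_derivative_iff by auto
qed

lemma merit_decreases_along_direction:
  assumes "d k \<noteq> 0"
  shows "\<exists>\<delta>>0. \<forall>t. 0 < t \<and> t < \<delta> \<longrightarrow> merit k (x k + t *\<^sub>R d k) < merit k (x k)"
proof -
  obtain D where D: "((\<lambda>t. (merit k (x k + t *\<^sub>R d k) - merit k (x k)) / t) \<longlongrightarrow> D) (at_right 0)"
    and "D \<le> - (d k \<bullet> (W k *v d k))"
    using merit_dir_deriv_le by blast
  moreover have "0 < d k \<bullet> (W k *v d k)" using W_spd assms by blast
  ultimately have "eventually (\<lambda>t. (merit k (x k + t *\<^sub>R d k) - merit k (x k)) / t < 0) (at_right 0)"
    by (intro order_tendstoD(2)[OF D]) simp
  then show ?thesis unfolding eventually_at_right_field by (auto simp: divide_less_0_iff)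
qed

lemma merit_armijo_decrease:
  "merit k (x (Suc k)) \<le> merit k (x k) - \<sigma>1 * \<alpha> k * (d k \<bullet> (W k *v d k))"
proof -
  obtain l where "\<alpha> k = \<beta> ^ l"
    and "merit k (x k + \<beta> ^ l *\<^sub>R d k) - merit k (x k) \<le> - \<sigma>1 * \<beta> ^ l * (d k \<bullet> (W k *v d k))"
    using armijo by blast
  then show ?thesis using x_upd by simp
qed

lemma xi_eventually_zero:
  assumes "bounded (range r)"
  shows "\<exists>K. \<forall>k\<ge>K. \<xi> k = 0"
proof (rule ccontr)
  assume "\<not> ?thesis"
  then have "infinite {k. \<xi> k \<noteq> 0}" unfolding infinite_nat_iff_unbounded_le by auto
  then have "filterlim r at_top sequentially"
    using params init r_upd by (intro filterlim_at_top_of_frequent_scaling[where c = \<sigma>']) auto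
  moreover obtain B where "\<And>k. norm (r k) \<le> B" using assms unfolding bounded_iff by auto
  ultimately obtain k where "B + 1 \<le> r k" "norm (r k) \<le> B"
    unfolding filterlim_at_top by (metis eventually_sequentially order_refl)
  then show False by simp
qed

lemma iterates_smoothing_bounded:
  assumes s: "0 < s" and bx: "bounded (range x)"
  shows "\<exists>B. \<forall>k. \<bar>fs s (x k)\<bar> \<le> B \<and> norm (dfs s (x k)) \<le> B"
proof -
  define C where "C = closure (range x)"
  have C: "compact C" "\<And>k. x k \<in> C"
    using bx closure_subset[of "range x"] by (auto simp: C_def compact_closure)
  have "continuous_on UNIV (fs s)"
    by (rule has_derivative_continuous_on, rule has_derivative_at_withinI, rule smoothing_derivatives(1)[OF s])
  then have "bounded (fs s ` C)"
    by (rule compact_imp_bounded[OF compact_continuous_image[OF continuous_on_subset[OF _ subset_UNIV] C(1)]])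
  then obtain B1 where B1: "\<forall>v\<in>fs s ` C. norm v \<le> B1" unfolding bounded_iff by blast
  have "bounded (dfs s ` C)"
    by (rule compact_imp_bounded[OF compact_continuous_image[OF
          continuous_on_subset[OF smoothing_derivatives(2)[OF s] subset_UNIV] C(1)]])
  then obtain B2 where B2: "\<forall>v\<in>dfs s ` C. norm v \<le> B2" unfolding bounded_iff by blast
  have "\<bar>fs s (x k)\<bar> \<le> max B1 B2 \<and> norm (dfs s (x k)) \<le> max B1 B2" for k
    using B1 B2 C(2)[of k] by fastforce
  then show ?thesis by blast
qed

lemma tail_constant:
  assumes fin: "finite {k. norm (d k) \<le> \<eta> / \<rho> k}" and br: "bounded (range r)"
  obtains K where "\<And>k. K \<le> k \<Longrightarrow> \<xi> k = 0 \<and> \<eta> / \<rho> K < norm (d k) \<and> \<rho> k = \<rho> K \<and> r k = r K"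
proof -
  obtain K1 where K1: "\<And>k. K1 \<le> k \<Longrightarrow> \<xi> k = 0" using xi_eventually_zero[OF br] by blast
  obtain m where "\<forall>k\<in>{k. norm (d k) \<le> \<eta> / \<rho> k}. k \<le> m"
    using fin unfolding finite_nat_set_iff_bounded_le by blast
  then have K2: "\<eta> / \<rho> k < norm (d k)" if "Suc m \<le> k" for k
    using that not_less by fastforce
  define K where "K = max K1 (Suc m)"
  have stay: "\<rho> k = \<rho> K \<and> r k = r K" if "K \<le> k" for k
    using that
  proof (induction k rule: dec_induct)
    case (step k)
    then show ?case using K1[of k] K2[of k] rho_upd r_upd by (simp add: K_def)
  qed simp
  show ?thesis
  proof (rule that)
    fix k assume k: "K \<le> k"
    show "\<xi> k = 0 \<and> \<eta> / \<rho> K < norm (d k) \<and> \<rho> k = \<rho> K \<and> r k = r K"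
      using K1[of k] K2[of k] stay[OF k] k by (simp add: K_def)
  qed
qed

lemma W_quadratic_nonneg: "0 \<le> v \<bullet> (W k *v v)"
  using W_spd by (cases "v = 0") (auto simp: less_imp_le)

lemma merit_lower_bound:
  assumes "0 < s" "0 \<le> c" "bounded (range x)"
  shows "\<exists>B. \<forall>k. B \<le> theta_s p q fs gs hs s c (x k)"
proof -
  obtain B where "\<And>k. \<bar>fs s (x k)\<bar> \<le> B" using iterates_smoothing_bounded[OF assms(1,3)] by blast
  then have "- B \<le> theta_s p q fs gs hs s c (x k)" for k
    using assms(2) phi_s_ge(3)[of p q gs hs s "x k"] by (smt (verit) abs_le_D2 mult_nonneg_nonneg theta_s_def)
  then show ?thesis by blast
qed

lemma tail_merit_le:
  assumes tail: "\<And>k. K \<le> k \<Longrightarrow> \<rho> k = \<rho> K \<and> r k = r K" and k: "K \<le> k"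
  shows "merit K (x k) \<le> merit K (x K)"
  using k
proof (induction k rule: dec_induct)
  case (step k)
  have "merit k (x (Suc k)) \<le> merit k (x k)"
    using merit_armijo_decrease[of k] params step_pos[of k] W_quadratic_nonneg[of "d k" k]
    by (smt (verit) mult_nonneg_nonneg)
  with step tail[of k] show ?case by simp
qed simp

lemma tail_directions_bounded:
  assumes mm: "0 < mm" "\<And>j v. mm * (norm v)\<^sup>2 \<le> v \<bullet> (W j *v v)" and bx: "bounded (range x)"
    and tail: "\<And>k. K \<le> k \<Longrightarrow> \<rho> k = \<rho> K \<and> r k = r K"
  shows "\<exists>B. \<forall>k\<ge>K. norm (d k) \<le> B"
proof -
  obtain G where G: "\<And>k. \<bar>fs (\<rho> K) (x k)\<bar> \<le> G \<and> norm (dfs (\<rho> K) (x k)) \<le> G"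
    using iterates_smoothing_bounded[OF rho_pos bx] by blast
  have "norm (d k) \<le> max 1 ((\<bar>2 * (merit K (x K) + G)\<bar> + 2 * G) / mm)" if k: "K \<le> k" for k
  proof (rule le_of_quadratic_le_linear[OF mm(1)])
    show "0 \<le> 2 * G" using G[of 0] abs_ge_zero[of "fs (\<rho> K) (x 0)"] by linarith
    have "qp_obj dfs (\<rho> k) (x k) (W k) (r k) (d k) (\<xi> k)
        \<le> qp_obj dfs (\<rho> k) (x k) (W k) (r k) 0 (phi_s p q gs hs (\<rho> k) (x k))"
      using qp_sol qp_feasible_zero_direction by blast
    then have "dfs (\<rho> K) (x k) \<bullet> d k + 1/2 * (d k \<bullet> (W k *v d k)) + r K * \<xi> k
        \<le> merit K (x k) - fs (\<rho> K) (x k)"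
      using tail[OF k] by (simp add: qp_obj_def theta_s_def)
    moreover have "0 \<le> r K * \<xi> k" using r_nonneg qp_feasible_iterate[of k]
      by (simp add: qp_feasible_def)
    moreover have "\<bar>dfs (\<rho> K) (x k) \<bullet> d k\<bar> \<le> G * norm (d k)"
      using Cauchy_Schwarz_ineq2 G[of k] by (blast intro: order_trans mult_right_mono norm_ge_zero)
    ultimately show "mm * (norm (d k))\<^sup>2 \<le> 2 * (merit K (x K) + G) + 2 * G * norm (d k)"
      using tail_merit_le[OF tail k] G[of k] mm(2)[of "d k" k] by (auto simp: abs_le_iff)
  qed simp
  then show ?thesis by blast
qed

lemma tail_steps_vanish:
  assumes bx: "bounded (range x)" and tail: "\<And>k. K \<le> k \<Longrightarrow> \<rho> k = \<rho> K \<and> r k = r K"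
    and c0: "0 < c0" "\<And>k. K \<le> k \<Longrightarrow> c0 \<le> d k \<bullet> (W k *v d k)"
  shows "(\<lambda>n. \<alpha> (K + n)) \<longlonglongrightarrow> 0"
proof -
  obtain B where B: "\<And>k. B \<le> merit K (x k)"
    using merit_lower_bound[OF rho_pos r_nonneg bx] by blast
  have "merit K (x (K + Suc n)) + \<sigma>1 * c0 * \<alpha> (K + n) \<le> merit K (x (K + n))" for n
  proof -
    have "\<sigma>1 * c0 * \<alpha> (K + n) \<le> \<sigma>1 * \<alpha> (K + n) * (d (K + n) \<bullet> (W (K + n) *v d (K + n)))"
      using c0(2)[of "K + n"] params step_pos[of "K + n"] by (simp add: mult.commute mult.left_commute)
    then show ?thesis using merit_armijo_decrease[of "K + n"] tail[of "K + n"] by simp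
  qed
  then have "summable (\<lambda>n. \<alpha> (K + n))"
    using B step_pos params c0(1) by (intro summable_of_bounded_decrease[where c = "\<sigma>1 * c0" and u = "\<lambda>n. merit K (x (K + n))"]) (auto intro: less_imp_le)
  then show ?thesis by (rule summable_LIMSEQ_zero)
qed

lemma armijo_rejects_previous_trial:
  assumes "\<alpha> k < 1"
  shows "- \<sigma>1 * (\<alpha> k / \<beta>) * (d k \<bullet> (W k *v d k)) < merit k (x k + (\<alpha> k / \<beta>) *\<^sub>R d k) - merit k (x k)"
proof -
  obtain l where l: "\<alpha> k = \<beta> ^ l" and fail: "\<And>l'. l' < l \<Longrightarrow>
      \<not> merit k (x k + \<beta> ^ l' *\<^sub>R d k) - merit k (x k) \<le> - \<sigma>1 * \<beta> ^ l' * (d k \<bullet> (W k *v d k))"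
    using armijo by blast
  have "l \<noteq> 0" using l assms by (cases l) auto
  then have prev: "\<alpha> k / \<beta> = \<beta> ^ (l - 1)" using l params by (cases l) auto
  show ?thesis using fail[of "l - 1"] \<open>l \<noteq> 0\<close> unfolding prev by simp
qed

lemma tail_merit_increment_le:
  assumes bx: "bounded (range x)" and tail: "\<And>k. K \<le> k \<Longrightarrow> \<rho> k = \<rho> K \<and> r k = r K"
    and BD: "\<And>n. norm (d (K + n)) \<le> BD" and T: "\<And>n. 0 < T n" and T0: "T \<longlonglongrightarrow> 0" and \<epsilon>: "0 < \<epsilon>"
  shows "eventually (\<lambda>n. merit (K + n) (x (K + n) + T n *\<^sub>R d (K + n)) - merit (K + n) (x (K + n))
           \<le> T n * (\<epsilon> * (1 + r K) - d (K + n) \<bullet> (W (K + n) *v d (K + n)))) sequentially"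
proof -
  obtain BX where BX: "\<And>n. norm (x (K + n)) \<le> BX" using bx unfolding bounded_iff by blast
  note lin = uniform_linearization_error[OF _ _ BX BD T T0 \<epsilon>]
  have "eventually (\<lambda>n. T n < 1 \<and>
      \<bar>fs (\<rho> K) (x (K + n) + T n *\<^sub>R d (K + n)) - fs (\<rho> K) (x (K + n))
         - T n * (dfs (\<rho> K) (x (K + n)) \<bullet> d (K + n))\<bar> \<le> T n * \<epsilon> \<and>
      (\<forall>i\<in>{1..p}. \<bar>gs (\<rho> K) i (x (K + n) + T n *\<^sub>R d (K + n)) - gs (\<rho> K) i (x (K + n))
          - T n * (dgs (\<rho> K) i (x (K + n)) \<bullet> d (K + n))\<bar> \<le> T n * \<epsilon>) \<and>
      (\<forall>j\<in>{p+1..q}. \<bar>hs (\<rho> K) j (x (K + n) + T n *\<^sub>R d (K + n)) - hs (\<rho> K) j (x (K + n))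
          - T n * (dhs (\<rho> K) j (x (K + n)) \<bullet> d (K + n))\<bar> \<le> T n * \<epsilon>)) sequentially"
    using order_tendstoD(2)[OF T0, of 1] smoothing_derivatives[OF rho_pos[of K]]
    by (intro eventually_conj eventually_ball_finite ballI lin) auto
  then show ?thesis
  proof eventually_elim
    case (elim n)
    define k where "k = K + n"
    have k: "\<rho> k = \<rho> K" "r k = r K" using tail[of k] by (auto simp: k_def)
    from elim have "T n \<le> 1" and errors:
      "\<bar>fs (\<rho> k) (x k + T n *\<^sub>R d k) - fs (\<rho> k) (x k) - T n * (dfs (\<rho> k) (x k) \<bullet> d k)\<bar> \<le> T n * \<epsilon>"
      "\<forall>i\<in>{1..p}. \<bar>gs (\<rho> k) i (x k + T n *\<^sub>R d k) - gs (\<rho> k) i (x k)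
          - T n * (dgs (\<rho> k) i (x k) \<bullet> d k)\<bar> \<le> T n * \<epsilon>"
      "\<forall>j\<in>{p+1..q}. \<bar>hs (\<rho> k) j (x k + T n *\<^sub>R d k) - hs (\<rho> k) j (x k)
          - T n * (dhs (\<rho> k) j (x k) \<bullet> d k)\<bar> \<le> T n * \<epsilon>"
      unfolding k by (auto simp: k_def)
    from theta_s_increment_le[where fs=fs, OF qp_feasible_iterate qp_kkt_iterate
        less_imp_le[OF T[of n]] this(1) less_imp_le[OF \<epsilon>] errors]
    show ?case by (simp add: k flip: k_def)
  qed
qed

lemma small_steps_infinite:
  assumes A31: "\<exists>m M. 0 < m \<and> m < M \<and> (\<forall>j v. m * norm v ^ 2 \<le> v \<bullet> (W j *v v) \<and> v \<bullet> (W j *v v) \<le> M * norm v ^ 2)"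
    and bx: "bounded (range x)" and br: "bounded (range r)"
  shows "infinite {k. norm (d k) \<le> \<eta> / \<rho> k}"
proof
  assume fin: "finite {k. norm (d k) \<le> \<eta> / \<rho> k}"
  obtain mm where mm: "0 < mm" "\<And>j v. mm * (norm v)\<^sup>2 \<le> v \<bullet> (W j *v v)" using A31 by blast
  obtain K where K: "\<And>k. K \<le> k \<Longrightarrow> \<xi> k = 0 \<and> \<eta> / \<rho> K < norm (d k) \<and> \<rho> k = \<rho> K \<and> r k = r K"
    using tail_constant[OF fin br] by blast
  then have tail: "\<And>k. K \<le> k \<Longrightarrow> \<rho> k = \<rho> K \<and> r k = r K" by blast
  define c0 where "c0 = mm * (\<eta> / \<rho> K)\<^sup>2"
  have c0: "0 < c0" using mm(1) params rho_pos[of K] by (simp add: c0_def)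
  have dW: "c0 \<le> d k \<bullet> (W k *v d k)" if "K \<le> k" for k
  proof -
    have "(\<eta> / \<rho> K)\<^sup>2 \<le> (norm (d k))\<^sup>2"
      using K[OF that] params rho_pos[of K] by (intro power_mono) auto
    then have "c0 \<le> mm * (norm (d k))\<^sup>2" unfolding c0_def using mm(1) by (simp add: mult_left_mono)
    then show ?thesis using mm(2)[of "d k" k] by linarith
  qed
  have \<alpha>0: "(\<lambda>n. \<alpha> (K + n)) \<longlonglongrightarrow> 0" by (rule tail_steps_vanish[OF bx tail c0 dW])
  obtain BD where BD: "\<And>n. norm (d (K + n)) \<le> BD"
    using tail_directions_bounded[OF mm bx tail] by (meson le_add1)
  define T where "T n = \<alpha> (K + n) / \<beta>" for n
  have T: "0 < T n" for n using step_pos params by (simp add: T_def)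
  have T0: "T \<longlonglongrightarrow> 0" using tendsto_divide_zero[OF \<alpha>0, of \<beta>] unfolding T_def .
  define \<epsilon> where "\<epsilon> = (1 - \<sigma>1) * c0 / (2 * (1 + r K))"
  have \<epsilon>: "0 < \<epsilon>" using params c0 r_nonneg[of K] by (simp add: \<epsilon>_def)
  obtain n where n: "\<alpha> (K + n) < 1" and up: "merit (K + n) (x (K + n) + T n *\<^sub>R d (K + n)) - merit (K + n) (x (K + n))
      \<le> T n * (\<epsilon> * (1 + r K) - d (K + n) \<bullet> (W (K + n) *v d (K + n)))"
    using eventually_conj[OF order_tendstoD(2)[OF \<alpha>0, of 1] tail_merit_increment_le[OF bx tail BD T T0 \<epsilon>]]
    by (auto dest: eventually_happens'[OF sequentially_bot])
  define k where "k = K + n"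
  have "- \<sigma>1 * T n * (d k \<bullet> (W k *v d k)) < merit k (x k + T n *\<^sub>R d k) - merit k (x k)"
    using armijo_rejects_previous_trial[OF n] by (simp add: T_def k_def)
  with up have "T n * ((1 - \<sigma>1) * (d k \<bullet> (W k *v d k))) < T n * (\<epsilon> * (1 + r K))"
    by (simp add: algebra_simps k_def)
  then have "(1 - \<sigma>1) * (d k \<bullet> (W k *v d k)) < \<epsilon> * (1 + r K)"
    using T[of n] by simp
  also have "\<dots> = (1 - \<sigma>1) * c0 / 2" using r_nonneg[of K] by (simp add: \<epsilon>_def field_simps)
  finally have "(1 - \<sigma>1) * (d k \<bullet> (W k *v d k)) < (1 - \<sigma>1) * c0 / 2" .
  moreover have "(1 - \<sigma>1) * c0 \<le> (1 - \<sigma>1) * (d k \<bullet> (W k *v d k))"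
    using dW[of k] params by (intro mult_left_mono) (auto simp: k_def)
  ultimately show False using params c0 by simp
qed

lemma rho_tendsto_infinity:
  assumes "\<exists>m M. 0 < m \<and> m < M \<and> (\<forall>j v. m * norm v ^ 2 \<le> v \<bullet> (W j *v v) \<and> v \<bullet> (W j *v v) \<le> M * norm v ^ 2)"
    and "bounded (range x)" "bounded (range r)"
  shows "filterlim \<rho> at_top sequentially"
  using small_steps_infinite[OF assms] params init rho_upd
  by (intro filterlim_at_top_of_frequent_scaling[where c = \<sigma>]) auto

definition component_grad :: "nat \<Rightarrow> nat \<Rightarrow> real ^ 'n" where
  "component_grad j k = (if j = 0 then dfs (\<rho> k) (x k) else if j \<le> p then dgs (\<rho> k) j (x k)
                         else dhs (\<rho> k) j (x k))"

definition component_mult :: "nat \<Rightarrow> nat \<Rightarrow> real" where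
  "component_mult j k = (if j = 0 then 1 else if j \<le> p then lg k j else lp k j - lm k j)"

lemma kkt_components: "W k *v d k + (\<Sum>j\<in>{0..q}. component_mult j k *\<^sub>R component_grad j k) = 0"
proof -
  have split: "{0..q} = insert 0 ({1..p} \<union> {p+1..q})" using pq by auto
  have "(\<Sum>j\<in>{0..q}. component_mult j k *\<^sub>R component_grad j k)
      = dfs (\<rho> k) (x k) + (\<Sum>i\<in>{1..p}. lg k i *\<^sub>R dgs (\<rho> k) i (x k))
        + (\<Sum>j\<in>{p+1..q}. (lp k j - lm k j) *\<^sub>R dhs (\<rho> k) j (x k))"
    unfolding split by (simp add: sum.union_disjoint component_mult_def component_grad_def add.assoc)
  then show ?thesis using kkt_d[rule_format, of k] by (simp add: algebra_simps)
qed

lemma components_bounded: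
  assumes bl: "\<exists>B. \<forall>k. (\<forall>i\<in>{1..p}. \<bar>lg k i\<bar> \<le> B) \<and> (\<forall>j\<in>{p+1..q}. \<bar>lp k j\<bar> \<le> B \<and> \<bar>lm k j\<bar> \<le> B) \<and> \<bar>lxi k\<bar> \<le> B"
    and s: "filterlim (\<lambda>k. \<rho> (s k)) at_top sequentially" and xs: "(\<lambda>k. x (s k)) \<longlonglongrightarrow> xb"
    and j: "j \<in> {0..q}"
  shows "bounded (range (\<lambda>k. (component_grad j (s k), component_mult j (s k))))"
proof -
  note grad_bd = smoothing_gradients_bounded[OF _ _ _ xs s rho_pos]
  have "bounded (range (\<lambda>k. component_grad j (s k)))"
  proof -
    consider "j = 0" | "j \<in> {1..p}" | "j \<in> {p+1..q}" using j by fastforce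
    then show ?thesis
    proof cases
      case 1
      then show ?thesis using grad_bd[of f fs dfs] sm_f lip_f by (simp add: component_grad_def)
    next
      case 2
      then show ?thesis using grad_bd[of "g j" "\<lambda>s. gs s j" "\<lambda>s. dgs s j"] sm_g lip_g
        by (simp add: component_grad_def)
    next
      case 3
      then show ?thesis using grad_bd[of "h j" "\<lambda>s. hs s j" "\<lambda>s. dhs s j"] sm_h lip_h
        by (simp add: component_grad_def)
    qed
  qed
  moreover have "bounded (range (\<lambda>k. component_mult j (s k)))"
  proof -
    obtain B where B: "\<And>k. (\<forall>i\<in>{1..p}. \<bar>lg k i\<bar> \<le> B) \<and> (\<forall>j\<in>{p+1..q}. \<bar>lp k j\<bar> \<le> B \<and> \<bar>lm k j\<bar> \<le> B)"
      using bl by blast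
    have "\<bar>component_mult j k\<bar> \<le> 1 + 2 * \<bar>B\<bar>" for k
    proof -
      consider "j = 0" | "j \<in> {1..p}" | "j \<in> {p+1..q}" using j by fastforce
      then show ?thesis
      proof cases
        case 2
        then have "\<bar>lg k j\<bar> \<le> B" using B by blast
        then show ?thesis using 2 by (simp add: component_mult_def)
      next
        case 3
        then have "\<bar>lp k j\<bar> \<le> B" "\<bar>lm k j\<bar> \<le> B" using B by blast+
        then show ?thesis using 3 by (simp add: component_mult_def)
      qed (simp add: component_mult_def)
    qed
    then show ?thesis unfolding bounded_iff by auto
  qed
  ultimately show ?thesis
    by (rule bounded_subset[OF bounded_Times]) auto
qed

lemma limit_gradients_in_clarke_grad:
  assumes \<rho>S: "filterlim (\<lambda>k. \<rho> (S k)) at_top sequentially" and xS: "(\<lambda>k. x (S k)) \<longlonglongrightarrow> xb"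
    and \<zeta>: "\<forall>j\<in>{0..q}. (\<lambda>k. component_grad j (S k)) \<longlonglongrightarrow> \<zeta> j"
  shows "\<zeta> 0 \<in> clarke_grad f xb" and "\<forall>i\<in>{1..p}. \<zeta> i \<in> clarke_grad (g i) xb"
    and "\<forall>j\<in>{p+1..q}. \<zeta> j \<in> clarke_grad (h j) xb"
proof -
  note \<zeta> = \<zeta>[rule_format]
  have grads: "\<zeta> j \<in> grad_limits dF xb"
    if "(\<lambda>k. dF (\<rho> (S k)) (x (S k))) \<longlonglongrightarrow> \<zeta> j" for dF j
    using xS rho_pos \<rho>S that by (rule grad_limitsI)
  have "(\<lambda>k. dfs (\<rho> (S k)) (x (S k))) \<longlonglongrightarrow> \<zeta> 0" using \<zeta>[of 0] by (simp add: component_grad_def)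
  from grads[OF this] show "\<zeta> 0 \<in> clarke_grad f xb" using sm_f unfolding grad_consistent_def by blast
  have "\<zeta> i \<in> clarke_grad (g i) xb" if i: "i \<in> {1..p}" for i
  proof -
    have "(\<lambda>k. dgs (\<rho> (S k)) i (x (S k))) \<longlonglongrightarrow> \<zeta> i" using \<zeta>[of i] i pq by (simp add: component_grad_def)
    from grads[OF this] show ?thesis using sm_g i unfolding grad_consistent_def by blast
  qed
  then show "\<forall>i\<in>{1..p}. \<zeta> i \<in> clarke_grad (g i) xb" by blast
  have "\<zeta> j \<in> clarke_grad (h j) xb" if j: "j \<in> {p+1..q}" for j
  proof -
    have "(\<lambda>k. dhs (\<rho> (S k)) j (x (S k))) \<longlonglongrightarrow> \<zeta> j" using \<zeta>[of j] j by (simp add: component_grad_def)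
    from grads[OF this] show ?thesis using sm_h j unfolding grad_consistent_def by blast
  qed
  then show "\<forall>j\<in>{p+1..q}. \<zeta> j \<in> clarke_grad (h j) xb" by blast
qed

lemma linearized_constraints_tendsto:
  assumes \<rho>S: "filterlim (\<lambda>k. \<rho> (S k)) at_top sequentially" and xS: "(\<lambda>k. x (S k)) \<longlonglongrightarrow> xb"
    and \<zeta>: "\<forall>j\<in>{0..q}. (\<lambda>k. component_grad j (S k)) \<longlonglongrightarrow> \<zeta> j"
    and d0: "(\<lambda>k. d (S k)) \<longlonglongrightarrow> 0"
  shows "i \<in> {1..p} \<Longrightarrow>
           (\<lambda>k. gs (\<rho> (S k)) i (x (S k)) + dgs (\<rho> (S k)) i (x (S k)) \<bullet> d (S k)) \<longlonglongrightarrow> g i xb"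
    and "j \<in> {p+1..q} \<Longrightarrow>
           (\<lambda>k. hs (\<rho> (S k)) j (x (S k)) + dhs (\<rho> (S k)) j (x (S k)) \<bullet> d (S k)) \<longlonglongrightarrow> h j xb"
proof -
  note \<zeta> = \<zeta>[rule_format]
  assume i: "i \<in> {1..p}"
  have "smoothing_family (g i) (\<lambda>s. gs s i) (\<lambda>s. dgs s i)" using sm_g i by blast
  moreover have "(\<lambda>k. dgs (\<rho> (S k)) i (x (S k))) \<longlonglongrightarrow> \<zeta> i"
    using \<zeta>[of i] i pq by (simp add: component_grad_def)
  ultimately show "(\<lambda>k. gs (\<rho> (S k)) i (x (S k)) + dgs (\<rho> (S k)) i (x (S k)) \<bullet> d (S k)) \<longlonglongrightarrow> g i xb"
    using smoothing_linearization_tendsto[OF _ xS \<rho>S _ d0] by blast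
next
  note \<zeta> = \<zeta>[rule_format]
  assume j: "j \<in> {p+1..q}"
  have "smoothing_family (h j) (\<lambda>s. hs s j) (\<lambda>s. dhs s j)" using sm_h j by blast
  moreover have "(\<lambda>k. dhs (\<rho> (S k)) j (x (S k))) \<longlonglongrightarrow> \<zeta> j"
    using \<zeta>[of j] j by (simp add: component_grad_def)
  ultimately show "(\<lambda>k. hs (\<rho> (S k)) j (x (S k)) + dhs (\<rho> (S k)) j (x (S k)) \<bullet> d (S k)) \<longlonglongrightarrow> h j xb"
    using smoothing_linearization_tendsto[OF _ xS \<rho>S _ d0] by blast
qed

lemma limit_feasible_complementary:
  assumes \<rho>S: "filterlim (\<lambda>k. \<rho> (S k)) at_top sequentially" and xS: "(\<lambda>k. x (S k)) \<longlonglongrightarrow> xb"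
    and \<zeta>: "\<forall>j\<in>{0..q}. (\<lambda>k. component_grad j (S k)) \<longlonglongrightarrow> \<zeta> j"
    and d0: "(\<lambda>k. d (S k)) \<longlonglongrightarrow> 0" and \<xi>S: "eventually (\<lambda>k. \<xi> (S k) = 0) sequentially"
    and m: "\<forall>i\<in>{1..p}. (\<lambda>k. component_mult i (S k)) \<longlonglongrightarrow> m i"
  shows "feasible_P p q g h xb" and "\<forall>i\<in>{1..p}. 0 \<le> m i \<and> (g i xb < 0 \<longrightarrow> m i = 0)"
proof -
  note lin_g = linearized_constraints_tendsto(1)[OF \<rho>S xS \<zeta> d0]
    and lin_h = linearized_constraints_tendsto(2)[OF \<rho>S xS \<zeta> d0]
  have cons_g: "gs (\<rho> k) i (x k) + dgs (\<rho> k) i (x k) \<bullet> d k \<le> \<xi> k" if "i \<in> {1..p}" for i k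
    using qp_feasible_iterate[of k] that by (auto simp: qp_feasible_def)
  have cons_h: "\<bar>hs (\<rho> k) j (x k) + dhs (\<rho> k) j (x k) \<bullet> d k\<bar> \<le> \<xi> k" if "j \<in> {p+1..q}" for j k
    using qp_feasible_iterate[of k] that by (auto simp: qp_feasible_def abs_le_iff)
  have "g i xb \<le> 0" if i: "i \<in> {1..p}" for i
  proof (rule tendsto_upperbound[OF lin_g[OF i] _ trivial_limit_sequentially])
    show "eventually (\<lambda>k. gs (\<rho> (S k)) i (x (S k)) + dgs (\<rho> (S k)) i (x (S k)) \<bullet> d (S k) \<le> 0) sequentially"
      using \<xi>S by eventually_elim (use cons_g[OF i] in metis)
  qed
  moreover have "h j xb = 0" if j: "j \<in> {p+1..q}" for j
  proof -
    have "eventually (\<lambda>k. \<bar>hs (\<rho> (S k)) j (x (S k)) + dhs (\<rho> (S k)) j (x (S k)) \<bullet> d (S k)\<bar> \<le> 0) sequentially"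
      using \<xi>S by eventually_elim (use cons_h[OF j] in metis)
    from tendsto_upperbound[OF tendsto_rabs[OF lin_h[OF j]] this trivial_limit_sequentially]
    show ?thesis by simp
  qed
  ultimately show "feasible_P p q g h xb" by (simp add: feasible_P_def)
  have "0 \<le> m i \<and> (g i xb < 0 \<longrightarrow> m i = 0)" if i: "i \<in> {1..p}" for i
  proof (intro conjI impI)
    have lg: "(\<lambda>k. lg (S k) i) \<longlonglongrightarrow> m i" using m[rule_format, OF i] i by (simp add: component_mult_def)
    then show "0 \<le> m i" using kkt_sign i by (intro LIMSEQ_le_const) auto
    assume "g i xb < 0"
    from order_tendstoD(2)[OF lin_g[OF i] this] \<xi>S
    have "eventually (\<lambda>k. lg (S k) i = 0) sequentially"
      by eventually_elim (use kkt_compl i in force)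
    with lg show "m i = 0" by (metis LIMSEQ_unique tendsto_eventually)
  qed
  then show "\<forall>i\<in>{1..p}. 0 \<le> m i \<and> (g i xb < 0 \<longrightarrow> m i = 0)" by blast
qed

lemma limit_of_components_stationary:
  assumes MM: "\<And>j v. v \<bullet> (W j *v v) \<le> MM * (norm v)\<^sup>2"
    and S: "strict_mono S" and small: "\<And>k. norm (d (S k)) \<le> \<eta> / \<rho> (S k)"
    and \<rho>: "filterlim \<rho> at_top sequentially" and xS: "(\<lambda>k. x (S k)) \<longlonglongrightarrow> xb"
    and \<xi>0: "\<And>k. K0 \<le> k \<Longrightarrow> \<xi> k = 0"
    and \<zeta>: "\<And>j. j \<in> {0..q} \<Longrightarrow> (\<lambda>k. component_grad j (S k)) \<longlonglongrightarrow> \<zeta> j"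
    and m: "\<And>j. j \<in> {0..q} \<Longrightarrow> (\<lambda>k. component_mult j (S k)) \<longlonglongrightarrow> m j"
  shows "clarke_stationary p q f g h xb"
proof -
  have \<rho>S: "filterlim (\<lambda>k. \<rho> (S k)) at_top sequentially"
    using filterlim_compose[OF \<rho> filterlim_subseq[OF S]] by simp
  have "(\<lambda>k. \<eta> / \<rho> (S k)) \<longlonglongrightarrow> 0"
    by (rule tendsto_divide_0[OF tendsto_const filterlim_at_top_imp_at_infinity[OF \<rho>S]])
  then have d0: "(\<lambda>k. d (S k)) \<longlonglongrightarrow> 0"
    by (rule Lim_null_comparison[OF always_eventually[OF allI[OF small]]])
  have "norm (W j *v v) \<le> MM * norm v" for j v
    using W_spd W_quadratic_nonneg MM by (intro norm_mult_vec_le_of_quadratic_bound) auto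
  then have Wd0: "(\<lambda>k. W (S k) *v d (S k)) \<longlonglongrightarrow> 0"
    by (intro Lim_null_comparison[OF always_eventually tendsto_mult_right_zero[OF tendsto_norm_zero[OF d0]]])
      blast
  have "\<xi> (S k) = 0" if "K0 \<le> k" for k
    using \<xi>0 order_trans[OF that seq_suble[OF S]] by blast
  then have \<xi>S: "eventually (\<lambda>k. \<xi> (S k) = 0) sequentially"
    unfolding eventually_sequentially by blast
  have "(\<lambda>k. W (S k) *v d (S k) + (\<Sum>j\<in>{0..q}. component_mult j (S k) *\<^sub>R component_grad j (S k)))
      \<longlonglongrightarrow> 0 + (\<Sum>j\<in>{0..q}. m j *\<^sub>R \<zeta> j)"
    using \<zeta> m by (intro tendsto_intros Wd0) auto
  then have "(\<Sum>j\<in>{0..q}. m j *\<^sub>R \<zeta> j) = 0"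
    unfolding kkt_components by (simp add: LIMSEQ_const_iff)
  moreover have "m 0 = 1" using m[of 0] by (simp add: component_mult_def LIMSEQ_const_iff)
  moreover have \<zeta>': "\<forall>j\<in>{0..q}. (\<lambda>k. component_grad j (S k)) \<longlonglongrightarrow> \<zeta> j"
    and m': "\<forall>i\<in>{1..p}. (\<lambda>k. component_mult i (S k)) \<longlonglongrightarrow> m i"
    using \<zeta> m pq by auto
  note limit_gradients_in_clarke_grad[OF \<rho>S xS \<zeta>']
    and limit_feasible_complementary[OF \<rho>S xS \<zeta>' d0 \<xi>S m']
  ultimately show ?thesis using pq by (intro clarke_stationaryI[where \<zeta>=\<zeta> and m=m]) auto
qed

lemma small_step_limits_stationary:
  assumes A31: "\<exists>m M. 0 < m \<and> m < M \<and> (\<forall>j v. m * norm v ^ 2 \<le> v \<bullet> (W j *v v) \<and> v \<bullet> (W j *v v) \<le> M * norm v ^ 2)"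
    and bx: "bounded (range x)"
    and bl: "\<exists>B. \<forall>k. (\<forall>i\<in>{1..p}. \<bar>lg k i\<bar> \<le> B) \<and> (\<forall>j\<in>{p+1..q}. \<bar>lp k j\<bar> \<le> B \<and> \<bar>lm k j\<bar> \<le> B) \<and> \<bar>lxi k\<bar> \<le> B"
    and br: "bounded (range r)"
    and s: "strict_mono s" "\<forall>k. s k \<in> {k. norm (d k) \<le> \<eta> / \<rho> k}" and xs: "(x \<circ> s) \<longlonglongrightarrow> xb"
  shows "clarke_stationary p q f g h xb"
proof -
  have \<rho>: "filterlim \<rho> at_top sequentially" by (rule rho_tendsto_infinity[OF A31 bx br])
  obtain MM where MM: "\<And>j v. v \<bullet> (W j *v v) \<le> MM * (norm v)\<^sup>2" using A31 by blast
  obtain K0 where K0: "\<And>k. K0 \<le> k \<Longrightarrow> \<xi> k = 0" using xi_eventually_zero[OF br] by blast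
  define X where "X j k = (component_grad j (s k), component_mult j (s k))" for j k
  have "bounded (range (X j))" if "j \<in> {0..q}" for j
    unfolding X_def using filterlim_compose[OF \<rho> filterlim_subseq[OF s(1)]] xs that
    by (intro components_bounded[OF bl]) (auto simp: o_def)
  then obtain t where t: "strict_mono t" and conv: "\<forall>j\<in>{0..q}. \<exists>l. (X j \<circ> t) \<longlonglongrightarrow> l"
    using finite_family_convergent_subsequence[of "{0..q}" X] by blast
  then obtain L where L: "\<And>j. j \<in> {0..q} \<Longrightarrow> (X j \<circ> t) \<longlonglongrightarrow> L j" by metis
  show ?thesis
  proof (rule limit_of_components_stationary[OF MM strict_mono_o[OF s(1) t] _ \<rho>])
    show "norm (d ((s \<circ> t) k)) \<le> \<eta> / \<rho> ((s \<circ> t) k)" for k using s(2) by simp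
    show "(\<lambda>k. x ((s \<circ> t) k)) \<longlonglongrightarrow> xb" using LIMSEQ_subseq_LIMSEQ[OF xs t] by (simp add: o_def)
    show "(\<lambda>k. component_grad j ((s \<circ> t) k)) \<longlonglongrightarrow> fst (L j)" if "j \<in> {0..q}" for j
      using tendsto_fst[OF L[OF that]] by (simp add: X_def o_def)
    show "(\<lambda>k. component_mult j ((s \<circ> t) k)) \<longlonglongrightarrow> snd (L j)" if "j \<in> {0..q}" for j
      using tendsto_snd[OF L[OF that]] by (simp add: X_def o_def)
  qed (rule K0)
qed

end

theorem theorem3p1:
  fixes f :: "real ^ 'n \<Rightarrow> real"
    and g h :: "nat \<Rightarrow> real ^ 'n \<Rightarrow> real"
    and p q :: nat
    and fs :: "real \<Rightarrow> real ^ 'n \<Rightarrow> real" and dfs :: "real \<Rightarrow> real ^ 'n \<Rightarrow> real ^ 'n"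
    and gs hs :: "real \<Rightarrow> nat \<Rightarrow> real ^ 'n \<Rightarrow> real"
    and dgs dhs :: "real \<Rightarrow> nat \<Rightarrow> real ^ 'n \<Rightarrow> real ^ 'n"
    and \<beta> \<sigma>1 \<sigma>2 \<sigma> \<sigma>' \<eta> :: real
    and x d :: "nat \<Rightarrow> real ^ 'n"
    and \<rho> \<xi> r \<alpha> :: "nat \<Rightarrow> real"
    and W :: "nat \<Rightarrow> real ^ 'n ^ 'n"
    and lg lp lm :: "nat \<Rightarrow> nat \<Rightarrow> real" and lxi :: "nat \<Rightarrow> real"
  assumes pq: "p \<le> q"
    and lip_f: "loc_lipschitz f"
    and lip_g: "\<forall>i\<in>{1..p}. loc_lipschitz (g i)"
    and lip_h: "\<forall>j\<in>{p+1..q}. loc_lipschitz (h j)"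
    and sm_f: "smoothing_family f fs dfs \<and> grad_consistent f dfs"
    and sm_g: "\<forall>i\<in>{1..p}. smoothing_family (g i) (\<lambda>s. gs s i) (\<lambda>s. dgs s i)
                            \<and> grad_consistent (g i) (\<lambda>s. dgs s i)"
    and sm_h: "\<forall>j\<in>{p+1..q}. smoothing_family (h j) (\<lambda>s. hs s j) (\<lambda>s. dhs s j)
                            \<and> grad_consistent (h j) (\<lambda>s. dhs s j)"
    and params: "0 < \<beta> \<and> \<beta> < 1 \<and> 0 < \<sigma>1 \<and> \<sigma>1 \<le> \<sigma>2 \<and> \<sigma>2 < 1 \<and> 1 < \<sigma> \<and> 1 < \<sigma>' \<and> 1 < \<eta>"
    and init: "\<rho> 0 > 0 \<and> r 0 > 0"
    and W_spd: "\<forall>k. transpose (W k) = W k \<and> (\<forall>v. v \<noteq> 0 \<longrightarrow> v \<bullet> (W k *v v) > 0)"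
    and qp_sol: "\<forall>k. qp_feasible p q gs dgs hs dhs (\<rho> k) (x k) (d k) (\<xi> k) \<and>
                   (\<forall>d' \<xi>'. qp_feasible p q gs dgs hs dhs (\<rho> k) (x k) d' \<xi>' \<longrightarrow>
                      qp_obj dfs (\<rho> k) (x k) (W k) (r k) (d k) (\<xi> k) \<le> qp_obj dfs (\<rho> k) (x k) (W k) (r k) d' \<xi>')"
    and kkt_sign: "\<forall>k. (\<forall>i\<in>{1..p}. lg k i \<ge> 0) \<and> (\<forall>j\<in>{p+1..q}. lp k j \<ge> 0 \<and> lm k j \<ge> 0) \<and> lxi k \<ge> 0"
    and kkt_d: "\<forall>k. dfs (\<rho> k) (x k) + W k *v d k + (\<Sum>i\<in>{1..p}. lg k i *\<^sub>R dgs (\<rho> k) i (x k))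
                    + (\<Sum>j\<in>{p+1..q}. (lp k j - lm k j) *\<^sub>R dhs (\<rho> k) j (x k)) = 0"
    and kkt_xi: "\<forall>k. r k = (\<Sum>i\<in>{1..p}. lg k i) + (\<Sum>j\<in>{p+1..q}. lp k j + lm k j) + lxi k"
    and kkt_compl: "\<forall>k. (\<forall>i\<in>{1..p}. lg k i * (gs (\<rho> k) i (x k) + dgs (\<rho> k) i (x k) \<bullet> d k - \<xi> k) = 0) \<and>
                       (\<forall>j\<in>{p+1..q}. lp k j * (hs (\<rho> k) j (x k) + dhs (\<rho> k) j (x k) \<bullet> d k - \<xi> k) = 0 \<and>
                                      lm k j * (- hs (\<rho> k) j (x k) - dhs (\<rho> k) j (x k) \<bullet> d k - \<xi> k) = 0) \<and>
                       lxi k * \<xi> k = 0"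
    and r_upd: "\<forall>k. r (Suc k) = (if \<xi> k = 0 then r k else \<sigma>' * r k)"
    and armijo: "\<forall>k. \<exists>l::nat. \<alpha> k = \<beta> ^ l \<and>
                   theta_s p q fs gs hs (\<rho> k) (r k) (x k + \<beta> ^ l *\<^sub>R d k) - theta_s p q fs gs hs (\<rho> k) (r k) (x k)
                      \<le> - \<sigma>1 * \<beta> ^ l * (d k \<bullet> (W k *v d k)) \<and>
                   (\<forall>l'<l. \<not> (theta_s p q fs gs hs (\<rho> k) (r k) (x k + \<beta> ^ l' *\<^sub>R d k) - theta_s p q fs gs hs (\<rho> k) (r k) (x k)
                      \<le> - \<sigma>1 * \<beta> ^ l' * (d k \<bullet> (W k *v d k))))"
    and x_upd: "\<forall>k. x (Suc k) = x k + \<alpha> k *\<^sub>R d k"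
    and rho_upd: "\<forall>k. \<rho> (Suc k) = (if norm (d k) \<le> \<eta> / \<rho> k then \<sigma> * \<rho> k else \<rho> k)"
  shows
    "(\<forall>k. (\<exists>D. ((\<lambda>t. (theta_s p q fs gs hs (\<rho> k) (r k) (x k + t *\<^sub>R d k)
                        - theta_s p q fs gs hs (\<rho> k) (r k) (x k)) / t) \<longlongrightarrow> D) (at_right 0)
               \<and> D \<le> - (d k \<bullet> (W k *v d k))) \<and>
          ((\<exists>m M. 0 < m \<and> m < M \<and> (\<forall>j v. m * norm v ^ 2 \<le> v \<bullet> (W j *v v) \<and> v \<bullet> (W j *v v) \<le> M * norm v ^ 2))
            \<and> d k \<noteq> 0 \<longrightarrow>
             (\<exists>\<delta>>0. \<forall>t. 0 < t \<and> t < \<delta> \<longrightarrow>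
                 theta_s p q fs gs hs (\<rho> k) (r k) (x k + t *\<^sub>R d k) < theta_s p q fs gs hs (\<rho> k) (r k) (x k)))) \<and>
     ((\<exists>m M. 0 < m \<and> m < M \<and> (\<forall>j v. m * norm v ^ 2 \<le> v \<bullet> (W j *v v) \<and> v \<bullet> (W j *v v) \<le> M * norm v ^ 2)) \<and>
      bounded (range x) \<and>
      (\<exists>B. \<forall>k. (\<forall>i\<in>{1..p}. \<bar>lg k i\<bar> \<le> B) \<and> (\<forall>j\<in>{p+1..q}. \<bar>lp k j\<bar> \<le> B \<and> \<bar>lm k j\<bar> \<le> B) \<and> \<bar>lxi k\<bar> \<le> B) \<and>
      bounded (range r)
      \<longrightarrow> infinite {k. norm (d k) \<le> \<eta> / \<rho> k} \<and>
          (\<forall>xb s. strict_mono s \<and> (\<forall>k. s k \<in> {k. norm (d k) \<le> \<eta> / \<rho> k}) \<and> (x \<circ> s) \<longlonglongrightarrow> xb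
                 \<longrightarrow> clarke_stationary p q f g h xb))"
proof -
  interpret smoothing_sqp f g h p q fs dfs gs hs dgs dhs \<beta> \<sigma>1 \<sigma>2 \<sigma> \<sigma>' \<eta> x d \<rho> \<xi> r \<alpha> W lg lp lm lxi
    by (rule smoothing_sqp.intro) (rule assms)+
  show ?thesis
    using merit_dir_deriv_le merit_decreases_along_direction small_steps_infinite
      small_step_limits_stationary by blast
qed

end
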